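(* Let $\mathcal{A}_1,\mathcal{A}_2$ be tautological algebras with maximal ideals $\mathfrak{m}_1,\mathfrak{m}_2$, and let $M_1,M_2\in\mathrm{Mat}_{2n}(\mathbb{C})$ be their structure matrices with respect to symplectic bases $\{X^1_1,\dots,X^1_{2n},t_1\}$ of $\mathfrak{m}_1$ and $\{X^2_1,\dots,X^2_{2n},t_2\}$ of $\mathfrak{m}_2$. Then $\mathcal{A}_1\cong\mathcal{A}_2$ (as unital algebras) if and only if there exists an invertible matrix $C\in\mathrm{GL}_{2n}(\mathbb{C})$ with $M_1=C\,M_2\,C^t$.
   Context: Work over $\mathbb{C}$, $n\ge1$. The Heisenberg group $\mathbb{H}_{2n+1}$ is $\mathbb{W}\times\mathbb{C}$ ($\mathbb{W}$ a $2n$-dimensional space with non-degenerate skew form $\omega$) with law $(w_1,t_1)(w_2,t_2)=(w_1+w_2,t_1+t_2+\tfrac12\omega(w_1,w_2))$; $T=(0,1)$, $\mathbb{I}=\mathbb{C}T$ its center. An $\mathbb{H}_{2n+1}$-structure on $\mathbb{P}V$, $V\cong\mathbb{C}^{2n+2}$, is an effective algebraic action with dense open orbit; the boundary is a hyperplane $\mathbb{P}V'$. Viewing $\mathbb{H}_{2n+1}\subset\mathbb{P}\mathrm{GL}_{2n+2}(\mathbb{C})$ and $\pi:\mathrm{GL}_{2n+2}\to\mathbb{P}\mathrm{GL}_{2n+2}$ the projection, the associated algebra $\mathcal{A}$ is the unital subalgebra of $\mathrm{Mat}_{2n+2}(\mathbb{C})$ generated by $\pi^{-1}(\mathbb{H}_{2n+1})$.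 For $o$ in the open orbit let $v=\overline{\mathbb{I}\cdot o}\setminus\mathbb{I}\cdot o$, $\hat v$ a representative, $\widetilde V=V/\mathbb{C}\hat v$; if $T$ fixes $\mathbb{P}V'$ pointwise, the action descends to a $\mathbb{G}_a^{2n}$-structure of $\mathbb{H}_{2n+1}/\mathbb{I}$ on $\mathbb{P}\widetilde V$, called tautological if in suitable coordinates it is $(a_i)\cdot[z_0,\dots,z_{2n}]=[z_0,z_1+a_1z_0,\dots,z_{2n}+a_{2n}z_0]$. A tautological algebra is the associated algebra of an $\mathbb{H}_{2n+1}$-structure for which $T$ fixes the boundary pointwise and the induced structure is tautological. For such $\mathcal{A}$ one has $\mathcal{A}=\mathbb{C}I_{2n+2}\oplus\mathfrak{m}$, where the maximal ideal $\mathfrak{m}$ is the (matrix realization of the) Lie algebra of $\mathbb{H}_{2n+1}$, a Heisenberg Lie algebra with center $\mathbb{C}t$ under the commutator bracket. A symplectic basis of $\mathfrak{m}$ is a basis $X_1,\dots,X_{2n},t$ with $X_iX_j-X_jX_i=\omega(X_i,X_j)t$, where $\omega(X_i,X_{n+j})=\delta_{ij}$ and $\omega(X_i,X_j)=\omega(X_{n+i},X_{n+j})=0$ for $1\le i,j\le n$. In such a basis each product $X_iX_j$ lies in $\mathbb{C}t$, say $X_iX_j=a_{ij}t$, and the structure matrix is $M_{\mathcal{A}}=(a_{ij})\in\mathrm{Mat}_{2n}(\mathbb{C})$. *)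

theory Defs
  imports "Jordan_Normal_Form.Matrix"
begin

definition omega :: "nat \<Rightarrow> nat \<Rightarrow> nat \<Rightarrow> complex" where
  "omega n i j = (if i < n \<and> j = i + n then 1 else if j < n \<and> i = j + n then -1 else 0)"

definition omega_form :: "nat \<Rightarrow> complex vec \<Rightarrow> complex vec \<Rightarrow> complex" where
  "omega_form n w1 w2 = (\<Sum>i<2*n. \<Sum>j<2*n. omega n i j * w1 $ i * w2 $ j)"

definition heis :: "nat \<Rightarrow> (complex vec \<times> complex) set" where
  "heis n = {(w, s). w \<in> carrier_vec (2*n)}"

definition heis_mult :: "nat \<Rightarrow> complex vec \<times> complex \<Rightarrow> complex vec \<times> complex \<Rightarrow> complex vec \<times> complex" where
  "heis_mult n g h = (fst g + fst h, snd g + snd h + omega_form n (fst g) (fst h) / 2)"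

definition heis_one :: "nat \<Rightarrow> complex vec \<times> complex" where
  "heis_one n = (0\<^sub>v (2*n), 0)"

definition heis_T :: "nat \<Rightarrow> complex vec \<times> complex" where
  "heis_T n = (0\<^sub>v (2*n), 1)"

inductive_set poly_fun :: "((nat \<Rightarrow> complex) \<Rightarrow> complex) set" where
  pf_const: "(\<lambda>x. c) \<in> poly_fun"
| pf_var: "(\<lambda>x. x k) \<in> poly_fun"
| pf_add: "p \<in> poly_fun \<Longrightarrow> q \<in> poly_fun \<Longrightarrow> (\<lambda>x. p x + q x) \<in> poly_fun"
| pf_mult: "p \<in> poly_fun \<Longrightarrow> q \<in> poly_fun \<Longrightarrow> (\<lambda>x. p x * q x) \<in> poly_fun"

definition heis_coords :: "nat \<Rightarrow> complex vec \<times> complex \<Rightarrow> nat \<Rightarrow> complex" where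
  "heis_coords n g k = (if k < 2*n then fst g $ k else if k = 2*n then snd g else 0)"

definition vec_coords :: "nat \<Rightarrow> complex vec \<Rightarrow> nat \<Rightarrow> complex" where
  "vec_coords N v k = (if k < N then v $ k else 0)"

definition hom_poly :: "nat \<Rightarrow> nat \<Rightarrow> (complex vec \<Rightarrow> complex) \<Rightarrow> bool" where
  "hom_poly N d f \<longleftrightarrow>
     (\<exists>p \<in> poly_fun. \<forall>v \<in> carrier_vec N. f v = p (vec_coords N v)) \<and>
     (\<forall>c. \<forall>v \<in> carrier_vec N. f (c \<cdot>\<^sub>v v) = c ^ d * f v)"

section \<open>Zariski topology on P^{N-1}, via cones in C^N - {0}\<close>

definition punct :: "nat \<Rightarrow> complex vec set" where
  "punct N = carrier_vec N - {0\<^sub>v N}"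

definition zclosed :: "nat \<Rightarrow> complex vec set \<Rightarrow> bool" where
  "zclosed N S \<longleftrightarrow> (\<exists>F. (\<forall>f \<in> F. \<exists>d. hom_poly N d f) \<and>
                         S = {v \<in> punct N. \<forall>f \<in> F. f v = 0})"

definition zclosure :: "nat \<Rightarrow> complex vec set \<Rightarrow> complex vec set" where
  "zclosure N S = {v \<in> punct N. \<forall>f d. hom_poly N d f \<and> (\<forall>u \<in> S. f u = 0) \<longrightarrow> f v = 0}"

section \<open>H_{2n+1}-structures on P V, V = C^{2n+2}, given by a lift rho : H \<rightarrow> GL_{2n+2}\<close>

definition orbit_cone :: "(complex vec \<times> complex \<Rightarrow> complex mat) \<Rightarrow> (complex vec \<times> complex) set
     \<Rightarrow> complex vec \<Rightarrow> complex vec set" where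
  "orbit_cone \<rho> G x = {c \<cdot>\<^sub>v (\<rho> g *\<^sub>v x) | c g. c \<noteq> 0 \<and> g \<in> G}"

definition line :: "complex vec \<Rightarrow> complex vec set" where
  "line y = {c \<cdot>\<^sub>v y | c. c \<noteq> 0}"

text \<open>Algebraic projective action (a morphism H \<rightarrow> PGL lifts to a polynomial map H \<rightarrow> GL,
  since Pic of affine space is trivial), effective, with a dense open orbit.\<close>
definition heis_structure :: "nat \<Rightarrow> (complex vec \<times> complex \<Rightarrow> complex mat) \<Rightarrow> bool" where
  "heis_structure n \<rho> \<longleftrightarrow>
     (let N = 2*n+2 in
       (\<forall>g \<in> heis n. \<rho> g \<in> carrier_mat N N \<and> invertible_mat (\<rho> g)) \<and>
       (\<forall>i<N. \<forall>j<N. \<exists>p \<in> poly_fun. \<forall>g \<in> heis n. \<rho> g $$ (i,j) = p (heis_coords n g)) \<and>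
       (\<forall>g \<in> heis n. \<forall>h \<in> heis n. \<exists>c. c \<noteq> 0 \<and> \<rho> (heis_mult n g h) = c \<cdot>\<^sub>m (\<rho> g * \<rho> h)) \<and>
       (\<forall>g \<in> heis n. (\<exists>c. \<rho> g = c \<cdot>\<^sub>m 1\<^sub>m N) \<longrightarrow> g = heis_one n) \<and>
       (\<exists>x \<in> punct N. zclosed N (punct N - orbit_cone \<rho> (heis n) x) \<and>
                       zclosure N (orbit_cone \<rho> (heis n) x) = punct N))"

text \<open>Standard (tautological) G_a^{2n} action on P^{2n}:
  (a)[z_0,..,z_{2n}] = [z_0, z_1 + a_1 z_0, ..., z_{2n} + a_{2n} z_0].\<close>
definition taut_mat :: "nat \<Rightarrow> complex vec \<Rightarrow> complex mat" where
  "taut_mat n a = mat (2*n+1) (2*n+1)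
     (\<lambda>(i,j). if i = j then 1 else if j = 0 \<and> i \<ge> 1 then a $ (i - 1) else 0)"

text \<open>Tautological structure: the central element T fixes the boundary (complement of the
  open orbit) pointwise, v = closure(I.o) - I.o is a point [y], and, in a basis of V whose
  last vector is y, the induced action on V/Cy is (after a linear change of coordinates L
  of H/I = G_a^{2n}) the tautological one.\<close>
definition taut_structure :: "nat \<Rightarrow> (complex vec \<times> complex \<Rightarrow> complex mat) \<Rightarrow> bool" where
  "taut_structure n \<rho> \<longleftrightarrow> heis_structure n \<rho> \<and>
     (let N = 2*n+2 in
      \<exists>x \<in> punct N.
        zclosed N (punct N - orbit_cone \<rho> (heis n) x) \<and>
        zclosure N (orbit_cone \<rho> (heis n) x) = punct N \<and>
        (\<forall>v \<in> punct N - orbit_cone \<rho> (heis n) x. \<exists>c. \<rho> (heis_T n) *\<^sub>v v = c \<cdot>\<^sub>v v) \<and>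
        (\<exists>y \<in> punct N.
           zclosure N (orbit_cone \<rho> {(0\<^sub>v (2*n), s) | s. True} x)
             - orbit_cone \<rho> {(0\<^sub>v (2*n), s) | s. True} x = line y \<and>
           (\<exists>Q Qi L. Q \<in> carrier_mat N N \<and> Qi \<in> carrier_mat N N \<and>
              Q * Qi = 1\<^sub>m N \<and> Qi * Q = 1\<^sub>m N \<and> Q *\<^sub>v unit_vec N (N - 1) = y \<and>
              L \<in> carrier_mat (2*n) (2*n) \<and> invertible_mat L \<and>
              (\<forall>g \<in> heis n. let R = Qi * \<rho> g * Q in
                 (\<forall>i < N - 1. R $$ (i, N - 1) = 0) \<and>
                 (\<exists>c. c \<noteq> 0 \<and> (\<forall>i < N - 1. \<forall>j < N - 1.
                        R $$ (i,j) = c * taut_mat n (L *\<^sub>v fst g) $$ (i,j)))))))"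

inductive_set alg_gen :: "nat \<Rightarrow> complex mat set \<Rightarrow> complex mat set" for N S where
  ag_one: "1\<^sub>m N \<in> alg_gen N S"
| ag_gen: "a \<in> S \<Longrightarrow> a \<in> alg_gen N S"
| ag_add: "a \<in> alg_gen N S \<Longrightarrow> b \<in> alg_gen N S \<Longrightarrow> a + b \<in> alg_gen N S"
| ag_smult: "a \<in> alg_gen N S \<Longrightarrow> c \<cdot>\<^sub>m a \<in> alg_gen N S"
| ag_mult: "a \<in> alg_gen N S \<Longrightarrow> b \<in> alg_gen N S \<Longrightarrow> a * b \<in> alg_gen N S"

definition assoc_alg :: "nat \<Rightarrow> (complex vec \<times> complex \<Rightarrow> complex mat) \<Rightarrow> complex mat set" where
  "assoc_alg n \<rho> = alg_gen (2*n+2) {c \<cdot>\<^sub>m \<rho> g | c g. c \<noteq> 0 \<and> g \<in> heis n}"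

definition tautological_algebra :: "nat \<Rightarrow> complex mat set \<Rightarrow> bool" where
  "tautological_algebra n A \<longleftrightarrow> (\<exists>\<rho>. taut_structure n \<rho> \<and> A = assoc_alg n \<rho>)"

definition two_sided_ideal :: "nat \<Rightarrow> complex mat set \<Rightarrow> complex mat set \<Rightarrow> bool" where
  "two_sided_ideal N A I \<longleftrightarrow> I \<subseteq> A \<and> 0\<^sub>m N N \<in> I \<and>
     (\<forall>a \<in> I. \<forall>b \<in> I. a + b \<in> I) \<and> (\<forall>c. \<forall>a \<in> I. c \<cdot>\<^sub>m a \<in> I) \<and>
     (\<forall>x \<in> A. \<forall>a \<in> I. x * a \<in> I \<and> a * x \<in> I)"

definition maximal_ideal :: "nat \<Rightarrow> complex mat set \<Rightarrow> complex mat set \<Rightarrow> bool" where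
  "maximal_ideal N A m \<longleftrightarrow> two_sided_ideal N A m \<and> m \<noteq> A \<and>
     (\<forall>J. two_sided_ideal N A J \<and> m \<subseteq> J \<longrightarrow> J = m \<or> J = A)"

fun msum :: "nat \<Rightarrow> (nat \<Rightarrow> complex mat) \<Rightarrow> nat \<Rightarrow> complex mat" where
  "msum N f 0 = 0\<^sub>m N N"
| "msum N f (Suc k) = msum N f k + f k"

definition symplectic_basis :: "nat \<Rightarrow> complex mat set \<Rightarrow> (nat \<Rightarrow> complex mat) \<Rightarrow> complex mat \<Rightarrow> bool" where
  "symplectic_basis n m X t \<longleftrightarrow>
     (let N = 2*n+2 in
       (\<forall>i < 2*n. X i \<in> carrier_mat N N) \<and> t \<in> carrier_mat N N \<and>
       (\<forall>c d. msum N (\<lambda>i. c i \<cdot>\<^sub>m X i) (2*n) + d \<cdot>\<^sub>m t = 0\<^sub>m N N \<longrightarrow>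
              (\<forall>i < 2*n. c i = 0) \<and> d = 0) \<and>
       m = {msum N (\<lambda>i. c i \<cdot>\<^sub>m X i) (2*n) + d \<cdot>\<^sub>m t | c d. True} \<and>
       (\<forall>i < 2*n. \<forall>j < 2*n. X i * X j - X j * X i = omega n i j \<cdot>\<^sub>m t))"

definition structure_matrix :: "nat \<Rightarrow> (nat \<Rightarrow> complex mat) \<Rightarrow> complex mat \<Rightarrow> complex mat \<Rightarrow> bool" where
  "structure_matrix n X t M \<longleftrightarrow> M \<in> carrier_mat (2*n) (2*n) \<and>
     (\<forall>i < 2*n. \<forall>j < 2*n. X i * X j = M $$ (i,j) \<cdot>\<^sub>m t)"

definition alg_iso :: "nat \<Rightarrow> complex mat set \<Rightarrow> complex mat set \<Rightarrow> bool" where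
  "alg_iso N A B \<longleftrightarrow> (\<exists>\<phi>. bij_betw \<phi> A B \<and> \<phi> (1\<^sub>m N) = 1\<^sub>m N \<and>
     (\<forall>x \<in> A. \<forall>y \<in> A. \<phi> (x + y) = \<phi> x + \<phi> y \<and> \<phi> (x * y) = \<phi> x * \<phi> y) \<and>
     (\<forall>c. \<forall>x \<in> A. \<phi> (c \<cdot>\<^sub>m x) = c \<cdot>\<^sub>m \<phi> x))"

end

(*
  Conjugate a tautological structure into the normal form of its definition, so that the last
  basis vector spans the limit point v and the induced action on V/v is tautological. Every
  element of the associated algebra A then preserves the flag <e_k> < <e_1,...,e_k> < C^(k+1)
  (k = 2n+1) and acts on the middle step by a scalar; its two extreme diagonal entries are
  characters of A. A character kills the commutator t = [X_0, X_n], hence every X_i (as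
  X_i X_i is a multiple of t), hence m. So m strictly lowers the three-step flag, m^3 = 0, and m
  is the kernel of a character, i.e. A = C 1 + m. The multiplication of A is then determined by
  X_i X_j = M_ij t:
    (c, v, d) (c', v', d') = (c c', c v' + c' v, c d' + c' d + v^T M v').
  A congruence M1 = C M2 C^T therefore gives the isomorphism (c, v, d) |-> (c, C^T v, d).
  Conversely an isomorphism maps m1 into m2 (the scalar coordinate of A2, pulled back, is a
  character of A1), sends t1 to s t2 with s <> 0, and the linear parts of the images of the X1_i
  are the rows of a matrix D with D M2 D^T = s M1. Taking skew parts, D transforms the
  nondegenerate symplectic matrix into s times itself, so D is invertible and C = D / sqrt s.
*)

theory Submission
  imports Defs "Jordan_Normal_Form.Determinant"
begin

lemma index_mult_mat_sum:
  "i < dim_row A \<Longrightarrow> j < dim_col B \<Longrightarrow> dim_col A = dim_row B \<Longrightarrow>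
   (A * B) $$ (i,j) = (\<Sum>l<dim_row B. A $$ (i,l) * B $$ (l,j))"
  by (auto simp: scalar_prod_def lessThan_atLeast0 intro!: sum.cong)

lemma index_mult_mat_single:
  fixes A B :: "'a::semiring_0 mat"
  assumes "i < dim_row A" "j < dim_col B" "dim_col A = dim_row B" "l0 < dim_row B"
    and "\<And>l. l < dim_row B \<Longrightarrow> l \<noteq> l0 \<Longrightarrow> A $$ (i,l) * B $$ (l,j) = 0"
  shows "(A * B) $$ (i,j) = A $$ (i,l0) * B $$ (l0,j)"
proof -
  have "(A * B) $$ (i,j) = (\<Sum>l\<in>{l0}. A $$ (i,l) * B $$ (l,j))"
    unfolding index_mult_mat_sum[OF assms(1-3)]
    by (rule sum.mono_neutral_right) (use assms(4,5) in auto)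
  then show ?thesis by simp
qed

lemma smult_zero_left_mat: "(0::'a::mult_zero) \<cdot>\<^sub>m A = 0\<^sub>m (dim_row A) (dim_col A)"
  by (rule eq_matI) auto

lemma smult_one_left_mat [simp]: "(1::'a::monoid_mult) \<cdot>\<^sub>m A = A"
  by (rule eq_matI) auto

lemma smult_smult_mat: "a \<cdot>\<^sub>m (b \<cdot>\<^sub>m A) = (a * b) \<cdot>\<^sub>m (A :: 'a::semigroup_mult mat)"
  by (rule eq_matI) (auto simp: mult.assoc)

lemma mult_mat_vec_index_sum:
  "A \<in> carrier_mat nr nc \<Longrightarrow> v \<in> carrier_vec nc \<Longrightarrow> i < nr \<Longrightarrow>
   (A *\<^sub>v v) $ i = (\<Sum>j<nc. A $$ (i,j) * v $ j)"
  by (auto simp: scalar_prod_def lessThan_atLeast0 intro!: sum.cong)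

lemma scalar_prod_sum: "w \<in> carrier_vec k \<Longrightarrow> v \<bullet> w = (\<Sum>i<k. v $ i * w $ i)"
  by (auto simp: scalar_prod_def lessThan_atLeast0)

lemma mult_mat_vec_zero: "A \<in> carrier_mat nr nc \<Longrightarrow> A *\<^sub>v 0\<^sub>v nc = (0\<^sub>v nr :: 'a::comm_ring_1 vec)"
  by (intro eq_vecI) auto

lemma transpose_smult_mat: "transpose_mat (a \<cdot>\<^sub>m A) = a \<cdot>\<^sub>m transpose_mat A"
  by (rule eq_matI) auto

lemma scalar_plus_mult:
  fixes w w' :: "'a::comm_ring_1 mat"
  assumes w: "w \<in> carrier_mat N N" and w': "w' \<in> carrier_mat N N"
  shows "(c \<cdot>\<^sub>m 1\<^sub>m N + w) * (c' \<cdot>\<^sub>m 1\<^sub>m N + w') = (c * c') \<cdot>\<^sub>m 1\<^sub>m N + c \<cdot>\<^sub>m w' + c' \<cdot>\<^sub>m w + w * w'"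
proof -
  let ?w' = "c' \<cdot>\<^sub>m 1\<^sub>m N + w'"
  have "(c \<cdot>\<^sub>m 1\<^sub>m N + w) * ?w' = (c \<cdot>\<^sub>m 1\<^sub>m N) * ?w' + w * ?w'"
    by (rule add_mult_distrib_mat) (use w w' in auto)
  also have "(c \<cdot>\<^sub>m 1\<^sub>m N) * ?w' = c \<cdot>\<^sub>m (1\<^sub>m N * ?w')"
    by (rule mult_smult_assoc_mat) (use w' in auto)
  also have "1\<^sub>m N * ?w' = ?w'" using w' by simp
  also have "w * ?w' = w * (c' \<cdot>\<^sub>m 1\<^sub>m N) + w * w'"
    by (rule mult_add_distrib_mat) (use w w' in auto)
  also have "w * (c' \<cdot>\<^sub>m 1\<^sub>m N) = c' \<cdot>\<^sub>m (w * 1\<^sub>m N)"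
    by (rule mult_smult_distrib) (use w in auto)
  also have "w * 1\<^sub>m N = w" using w by simp
  finally show ?thesis using w w' by (intro eq_matI) (auto simp: algebra_simps)
qed

lemma invertible_mat_of_det_neq_0:
  fixes A :: "'a::field mat"
  assumes A: "A \<in> carrier_mat k k" and det: "det A \<noteq> 0"
  shows "invertible_mat A"
proof -
  obtain B where "B \<in> carrier_mat k k" "B * A = 1\<^sub>m k" "A * B = 1\<^sub>m k"
    using det_non_zero_imp_unit[OF A det, of "()"] unfolding Units_def ring_mat_def by auto
  then show ?thesis using A unfolding invertible_mat_def inverts_mat_def square_mat.simps by auto
qed

lemma invertible_matE:
  assumes "invertible_mat C" and C: "C \<in> carrier_mat k k"
  obtains D where "D \<in> carrier_mat k k" "C * D = 1\<^sub>m k" "D * C = 1\<^sub>m k"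
proof -
  obtain D where CD: "C * D = 1\<^sub>m k" and DC: "D * C = 1\<^sub>m (dim_row D)"
    using assms unfolding invertible_mat_def inverts_mat_def by auto
  have "dim_col D = k" using CD C by (metis index_mult_mat(3) index_one_mat(3))
  moreover have "dim_row D = k"
    using DC C by (metis carrier_matD(2) index_mult_mat(3) index_one_mat(3))
  ultimately show ?thesis using that CD DC by auto
qed

lemma congruence_index:
  fixes D M :: "'a::comm_semiring_0 mat"
  assumes D: "D \<in> carrier_mat k k" and M: "M \<in> carrier_mat k k" and i: "i < k" and j: "j < k"
  shows "(D * M * transpose_mat D) $$ (i,j) = row D i \<bullet> (M *\<^sub>v row D j)"
proof -
  have r: "row (D * M) i = transpose_mat M *\<^sub>v row D i"
  proof (rule eq_vecI)
    fix l assume "l < dim_vec (transpose_mat M *\<^sub>v row D i)"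
    then have l: "l < k" using M by simp
    show "row (D * M) i $ l = (transpose_mat M *\<^sub>v row D i) $ l"
      using D M i l comm_scalar_prod[of "row D i" k "col M l"] by simp
  qed (use D M in simp)
  have "(D * M * transpose_mat D) $$ (i,j) = row (D * M) i \<bullet> col (transpose_mat D) j"
    by (rule index_mult_mat(1)) (use D M i j in auto)
  also have "\<dots> = (transpose_mat M *\<^sub>v row D i) \<bullet> row D j" unfolding r using D j by simp
  also have "\<dots> = row D i \<bullet> (M *\<^sub>v row D j)"
    by (rule transpose_vec_mult_scalar) (use D M i j in auto)
  finally show ?thesis .
qed

context
  fixes Q Qi :: "complex mat" and N :: nat
  assumes Q: "Q \<in> carrier_mat N N" and Qi: "Qi \<in> carrier_mat N N"
    and QQi: "Q * Qi = 1\<^sub>m N" and QiQ: "Qi * Q = 1\<^sub>m N"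
begin

lemma conj_mat_one: "Qi * 1\<^sub>m N * Q = 1\<^sub>m N"
  using Qi QiQ by simp

lemma conj_mat_add:
  "a \<in> carrier_mat N N \<Longrightarrow> b \<in> carrier_mat N N \<Longrightarrow> Qi * (a + b) * Q = Qi * a * Q + Qi * b * Q"
  using Q Qi by (simp add: mult_add_distrib_mat add_mult_distrib_mat[of _ N N])

lemma conj_mat_smult: "a \<in> carrier_mat N N \<Longrightarrow> Qi * (c \<cdot>\<^sub>m a) * Q = c \<cdot>\<^sub>m (Qi * a * Q)"
  using Q Qi by (simp add: mult_smult_distrib mult_smult_assoc_mat[of _ N N])

lemma conj_mat_mult:
  assumes a: "a \<in> carrier_mat N N" and b: "b \<in> carrier_mat N N"
  shows "Qi * (a * b) * Q = (Qi * a * Q) * (Qi * b * Q)"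
proof -
  have "(Qi * a * Q) * (Qi * b * Q) = Qi * a * (Q * Qi) * b * Q"
    using Q Qi a b by (simp add: assoc_mult_mat[of _ N N _ N _ N])
  also have "\<dots> = Qi * (a * b) * Q"
    using Q Qi a b QQi by (simp add: assoc_mult_mat[of _ N N _ N _ N])
  finally show ?thesis ..
qed

lemma conj_mat_eq_0:
  assumes a: "a \<in> carrier_mat N N" and "Qi * a * Q = 0\<^sub>m N N"
  shows "a = 0\<^sub>m N N"
proof -
  have "Q * (Qi * a * Q) * Qi = (Q * Qi) * a * (Q * Qi)"
    using Q Qi a by (simp add: assoc_mult_mat[of _ N N _ N _ N])
  then show ?thesis using assms Q Qi QQi by simp
qed

end

lemma msum_carrier: "(\<And>i. i < k \<Longrightarrow> f i \<in> carrier_mat N N) \<Longrightarrow> msum N f k \<in> carrier_mat N N"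
  by (induction k) auto

lemma msum_index:
  "(\<And>i. i < k \<Longrightarrow> f i \<in> carrier_mat N N) \<Longrightarrow> a < N \<Longrightarrow> b < N \<Longrightarrow>
   msum N f k $$ (a,b) = (\<Sum>l<k. f l $$ (a,b))"
proof (induction k)
  case (Suc k)
  have "msum N f k \<in> carrier_mat N N" using Suc.prems msum_carrier[of k f N] by auto
  moreover have "dim_row (f k) = N" "dim_col (f k) = N" using Suc.prems(1)[of k] by auto
  ultimately show ?case using Suc by simp
qed simp

lemma msum_cong: "(\<And>i. i < k \<Longrightarrow> f i = g i) \<Longrightarrow> msum N f k = msum N g k"
  by (induction k) auto

lemma msum_closed:
  "0\<^sub>m N N \<in> S \<Longrightarrow> (\<And>a b. a \<in> S \<Longrightarrow> b \<in> S \<Longrightarrow> a + b \<in> S) \<Longrightarrow> (\<And>i. i < k \<Longrightarrow> f i \<in> S) \<Longrightarrow>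
   msum N f k \<in> S"
  by (induction k) auto

lemma msum_mult_right:
  "(\<And>i. i < k \<Longrightarrow> f i \<in> carrier_mat N N) \<Longrightarrow> Y \<in> carrier_mat N N \<Longrightarrow>
   msum N f k * Y = msum N (\<lambda>i. f i * Y) k"
proof (induction k)
  case (Suc k)
  then show ?case using msum_carrier[of k f N] by (simp add: add_mult_distrib_mat)
qed auto

lemma msum_mult_left:
  "(\<And>i. i < k \<Longrightarrow> f i \<in> carrier_mat N N) \<Longrightarrow> Y \<in> carrier_mat N N \<Longrightarrow>
   Y * msum N f k = msum N (\<lambda>i. Y * f i) k"
proof (induction k)
  case (Suc k)
  then show ?case using msum_carrier[of k f N] by (simp add: mult_add_distrib_mat)
qed auto

lemma msum_smult: "T \<in> carrier_mat N N \<Longrightarrow> msum N (\<lambda>j. a j \<cdot>\<^sub>m T) k = (\<Sum>j<k. a j) \<cdot>\<^sub>m T"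
  by (induction k) (auto simp: smult_zero_left_mat add_smult_distrib_right_mat)

definition lowers_level :: "(nat \<Rightarrow> nat) \<Rightarrow> nat \<Rightarrow> 'a::zero mat \<Rightarrow> bool" where
  "lowers_level lev d P \<longleftrightarrow>
     (\<forall>i < dim_row P. \<forall>j < dim_col P. P $$ (i,j) \<noteq> 0 \<longrightarrow> lev i + d \<le> lev j)"

lemma lowers_levelD:
  "lowers_level lev d P \<Longrightarrow> i < dim_row P \<Longrightarrow> j < dim_col P \<Longrightarrow> P $$ (i,j) \<noteq> 0 \<Longrightarrow>
   lev i + d \<le> lev j"
  unfolding lowers_level_def by blast

lemma lowers_level_add:
  fixes P Q :: "'a::monoid_add mat"
  assumes "lowers_level lev d P" "lowers_level lev d Q" "Q \<in> carrier_mat (dim_row P) (dim_col P)"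
  shows "lowers_level lev d (P + Q)"
  using assms unfolding lowers_level_def by force

lemma lowers_level_smult:
  fixes P :: "'a::mult_zero mat"
  shows "lowers_level lev d P \<Longrightarrow> lowers_level lev d (c \<cdot>\<^sub>m P)"
  unfolding lowers_level_def by force

lemma lowers_level_mult:
  fixes P Q :: "'a::semiring_0 mat"
  assumes P: "lowers_level lev d P" and Q: "lowers_level lev e Q" and dim: "dim_col P = dim_row Q"
  shows "lowers_level lev (d + e) (P * Q)"
  unfolding lowers_level_def
proof (intro allI impI)
  fix i j assume i: "i < dim_row (P * Q)" and j: "j < dim_col (P * Q)"
    and nz: "(P * Q) $$ (i,j) \<noteq> 0"
  have "(\<Sum>l<dim_row Q. P $$ (i,l) * Q $$ (l,j)) \<noteq> 0"
    using nz index_mult_mat_sum[of i P j Q] i j dim by simp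
  then obtain l where l: "l < dim_row Q" "P $$ (i,l) \<noteq> 0" "Q $$ (l,j) \<noteq> 0"
    by (metis (no_types, lifting) lessThan_iff mult_not_zero sum.neutral)
  then show "lev i + (d + e) \<le> lev j"
    using lowers_levelD[OF P, of i l] lowers_levelD[OF Q, of l j] i j dim by auto
qed

lemma lowers_level_eq_0:
  assumes "lowers_level lev d P" "\<And>j. j < dim_col P \<Longrightarrow> lev j < d"
  shows "P = 0\<^sub>m (dim_row P) (dim_col P)"
proof (rule eq_matI)
  fix i j assume "i < dim_row (0\<^sub>m (dim_row P) (dim_col P) :: 'a mat)"
    "j < dim_col (0\<^sub>m (dim_row P) (dim_col P) :: 'a mat)"
  then show "P $$ (i,j) = 0\<^sub>m (dim_row P) (dim_col P) $$ (i,j)"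
    using lowers_levelD[OF assms(1), of i j] assms(2)[of j] by fastforce
qed auto

section \<open>The shape of a tautological structure\<close>

(*
  Levels of the flag <e_k> < <e_1,...,e_k> < C^(k+1). The normal form of taut_structure (last
  column zero above the diagonal, upper-left block a multiple of taut_mat) is taut_shape:
  level-preserving, with the middle block a scalar matrix.
*)
definition taut_level :: "nat \<Rightarrow> nat \<Rightarrow> nat" where
  "taut_level k i = (if i = 0 then 2 else if i < k then 1 else 0)"

definition taut_shape :: "nat \<Rightarrow> complex mat \<Rightarrow> bool" where
  "taut_shape k P \<longleftrightarrow> P \<in> carrier_mat (Suc k) (Suc k) \<and> lowers_level (taut_level k) 0 P \<and>
     (\<forall>i<k. \<forall>j<k. 0 < j \<longrightarrow> P $$ (i,j) = (if i = j then P $$ (0,0) else 0))"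

lemma taut_shape_one: "0 < k \<Longrightarrow> taut_shape k (1\<^sub>m (Suc k))"
  unfolding taut_shape_def lowers_level_def by auto

lemma taut_shape_add: "taut_shape k P \<Longrightarrow> taut_shape k Q \<Longrightarrow> taut_shape k (P + Q)"
  unfolding taut_shape_def by (auto intro!: lowers_level_add)

lemma taut_shape_smult: "taut_shape k P \<Longrightarrow> taut_shape k (c \<cdot>\<^sub>m P)"
  unfolding taut_shape_def by (auto intro!: lowers_level_smult)

lemma taut_shape_corner_mult:
  assumes P: "taut_shape k P" and Q: "taut_shape k Q" and k: "0 < k"
  shows "(P * Q) $$ (0,0) = P $$ (0,0) * Q $$ (0,0)"
    and "(P * Q) $$ (k,k) = P $$ (k,k) * Q $$ (k,k)"
proof -
  have c: "P \<in> carrier_mat (Suc k) (Suc k)" "Q \<in> carrier_mat (Suc k) (Suc k)"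
    and lP: "lowers_level (taut_level k) 0 P" and lQ: "lowers_level (taut_level k) 0 Q"
    using P Q unfolding taut_shape_def by auto
  show "(P * Q) $$ (0,0) = P $$ (0,0) * Q $$ (0,0)"
  proof (rule index_mult_mat_single)
    fix l assume "l < dim_row Q" "l \<noteq> 0"
    then show "P $$ (0,l) * Q $$ (l,0) = 0"
      using lowers_levelD[OF lP, of 0 l] c by (cases "l < k") (auto simp: taut_level_def)
  qed (use c in auto)
  show "(P * Q) $$ (k,k) = P $$ (k,k) * Q $$ (k,k)"
  proof (rule index_mult_mat_single)
    fix l assume "l < dim_row Q" "l \<noteq> k"
    then show "P $$ (k,l) * Q $$ (l,k) = 0"
      using lowers_levelD[OF lQ, of l k] c k
      by (cases "l < k") (auto simp: taut_level_def split: if_splits)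
  qed (use c in auto)
qed

lemma taut_shape_mult:
  assumes P: "taut_shape k P" and Q: "taut_shape k Q" and k: "0 < k"
  shows "taut_shape k (P * Q)"
proof -
  have c: "P \<in> carrier_mat (Suc k) (Suc k)" "Q \<in> carrier_mat (Suc k) (Suc k)"
    and lP: "lowers_level (taut_level k) 0 P" and lQ: "lowers_level (taut_level k) 0 Q"
    and sP: "\<And>i j. i < k \<Longrightarrow> j < k \<Longrightarrow> 0 < j \<Longrightarrow> P $$ (i,j) = (if i = j then P $$ (0,0) else 0)"
    and sQ: "\<And>i j. i < k \<Longrightarrow> j < k \<Longrightarrow> 0 < j \<Longrightarrow> Q $$ (i,j) = (if i = j then Q $$ (0,0) else 0)"
    using P Q unfolding taut_shape_def by auto
  have "(P * Q) $$ (i,j) = (if i = j then (P * Q) $$ (0,0) else 0)"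
    if i: "i < k" and j: "j < k" "0 < j" for i j
  proof -
    have "(P * Q) $$ (i,j) = P $$ (i,i) * Q $$ (i,j)"
    proof (rule index_mult_mat_single)
      fix l assume l: "l < dim_row Q" "l \<noteq> i"
      show "P $$ (i,l) * Q $$ (l,j) = 0"
      proof (rule ccontr)
        assume "P $$ (i,l) * Q $$ (l,j) \<noteq> 0"
        then have "taut_level k i \<le> taut_level k l" "taut_level k l \<le> taut_level k j"
          "P $$ (i,l) \<noteq> 0"
          using lowers_levelD[OF lP, of i l] lowers_levelD[OF lQ, of l j] c i j l by auto
        then show False using sP[of i l] i j l c by (auto simp: taut_level_def split: if_splits)
      qed
    qed (use c i j in auto)
    moreover have "P $$ (i,i) = P $$ (0,0)" using sP[of i i] i by (cases "i = 0") auto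
    ultimately show ?thesis using sQ[OF i j] taut_shape_corner_mult(1)[OF P Q k] by simp
  qed
  moreover have "lowers_level (taut_level k) (0 + 0) (P * Q)"
    by (rule lowers_level_mult[OF lP lQ]) (use c in auto)
  ultimately show ?thesis unfolding taut_shape_def using c by auto
qed

lemma taut_shape_nil:
  assumes P: "taut_shape k P" and "P $$ (0,0) = 0" "P $$ (k,k) = 0"
  shows "lowers_level (taut_level k) 1 P"
  unfolding lowers_level_def
proof (intro allI impI)
  fix i j assume i: "i < dim_row P" and j: "j < dim_col P" and nz: "P $$ (i,j) \<noteq> 0"
  have c: "P \<in> carrier_mat (Suc k) (Suc k)" and l: "lowers_level (taut_level k) 0 P"
    and s: "\<And>i j. i < k \<Longrightarrow> j < k \<Longrightarrow> 0 < j \<Longrightarrow> P $$ (i,j) = (if i = j then P $$ (0,0) else 0)"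
    using P unfolding taut_shape_def by auto
  have "taut_level k i \<le> taut_level k j" using lowers_levelD[OF l i j nz] by simp
  moreover have "taut_level k i \<noteq> taut_level k j"
  proof
    assume lev: "taut_level k i = taut_level k j"
    consider "i = 0" | "0 < i" "i < k" | "i = k" using i c by fastforce
    then show False
    proof cases
      case 1
      then show ?thesis using lev nz assms(2) by (auto simp: taut_level_def split: if_splits)
    next
      case 2
      then show ?thesis
        using lev nz s[of i j] assms(2) j c by (auto simp: taut_level_def split: if_splits)
    next
      case 3
      then have "j = k" using lev j c by (auto simp: taut_level_def split: if_splits)
      then show ?thesis using 3 nz assms(3) by simp
    qed
  qed
  ultimately show "taut_level k i + 1 \<le> taut_level k j" by simp
qed

lemma taut_nil_product_eq_0:
  assumes "lowers_level (taut_level k) 1 P" "lowers_level (taut_level k) 1 Q"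
    "lowers_level (taut_level k) 1 R"
    and "P \<in> carrier_mat N N" "Q \<in> carrier_mat N N" "R \<in> carrier_mat N N"
  shows "P * Q * R = 0\<^sub>m N N"
proof -
  have "lowers_level (taut_level k) (1 + 1 + 1) (P * Q * R)"
    using assms by (intro lowers_level_mult) auto
  from lowers_level_eq_0[OF this] show ?thesis
    using assms(4-6) by (simp add: taut_level_def)
qed

lemma taut_shape_of_taut_mat:
  assumes R: "R \<in> carrier_mat (Suc k) (Suc k)" and k: "k = 2*n+1"
    and last_col: "\<forall>i<k. R $$ (i,k) = 0"
    and block: "\<forall>i<k. \<forall>j<k. R $$ (i,j) = c * taut_mat n a $$ (i,j)"
  shows "taut_shape k R"
proof -
  have "taut_level k i \<le> taut_level k j" if "i < Suc k" "j < Suc k" "R $$ (i,j) \<noteq> 0" for i j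
    using that last_col block k
    by (cases "j = k"; cases "i = k") (auto simp: taut_level_def taut_mat_def split: if_splits)
  then have "lowers_level (taut_level k) 0 R" unfolding lowers_level_def using R by auto
  moreover have "\<forall>i<k. \<forall>j<k. 0 < j \<longrightarrow> R $$ (i,j) = (if i = j then R $$ (0,0) else 0)"
    using block k by (auto simp: taut_mat_def)
  ultimately show ?thesis unfolding taut_shape_def using R by blast
qed

section \<open>Subalgebras and characters\<close>

definition subalgebra :: "nat \<Rightarrow> complex mat set \<Rightarrow> bool" where
  "subalgebra N A \<longleftrightarrow> A \<subseteq> carrier_mat N N \<and> 1\<^sub>m N \<in> A \<and>
     (\<forall>x\<in>A. \<forall>y\<in>A. x + y \<in> A \<and> x * y \<in> A) \<and> (\<forall>c. \<forall>x\<in>A. c \<cdot>\<^sub>m x \<in> A)"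

definition character :: "nat \<Rightarrow> complex mat set \<Rightarrow> (complex mat \<Rightarrow> complex) \<Rightarrow> bool" where
  "character N A \<chi> \<longleftrightarrow> \<chi> (1\<^sub>m N) = 1 \<and>
     (\<forall>x\<in>A. \<forall>y\<in>A. \<chi> (x + y) = \<chi> x + \<chi> y \<and> \<chi> (x * y) = \<chi> x * \<chi> y) \<and>
     (\<forall>c. \<forall>x\<in>A. \<chi> (c \<cdot>\<^sub>m x) = c * \<chi> x)"

context
  fixes N A assumes A: "subalgebra N A"
begin

lemma subalgebra_carrier: "x \<in> A \<Longrightarrow> x \<in> carrier_mat N N"
  and subalgebra_one: "1\<^sub>m N \<in> A"
  and subalgebra_add: "x \<in> A \<Longrightarrow> y \<in> A \<Longrightarrow> x + y \<in> A"
  and subalgebra_mult: "x \<in> A \<Longrightarrow> y \<in> A \<Longrightarrow> x * y \<in> A"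
  and subalgebra_smult: "x \<in> A \<Longrightarrow> c \<cdot>\<^sub>m x \<in> A"
  using A unfolding subalgebra_def by blast+

lemma subalgebra_zero: "0\<^sub>m N N \<in> A"
  using subalgebra_smult[OF subalgebra_one, of 0] by (simp add: smult_zero_left_mat)

lemma character_zero: "character N A \<chi> \<Longrightarrow> \<chi> (0\<^sub>m N N) = 0"
  using subalgebra_one smult_zero_left_mat[of "1\<^sub>m N"] unfolding character_def
  by (metis index_one_mat(2,3) mult_zero_left)

end

lemma subalgebra_alg_gen:
  assumes "S \<subseteq> carrier_mat N N"
  shows "subalgebra N (alg_gen N S)"
proof -
  have "x \<in> carrier_mat N N" if "x \<in> alg_gen N S" for x
    using that assms by induction auto
  then show ?thesis unfolding subalgebra_def by (auto intro: alg_gen.intros)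
qed

lemma character_kernel_ideal:
  assumes A: "subalgebra N A" and \<chi>: "character N A \<chi>"
  shows "two_sided_ideal N A {w \<in> A. \<chi> w = 0}"
proof -
  have "\<chi> (x * a) = 0 \<and> \<chi> (a * x) = 0" if "x \<in> A" "a \<in> A" "\<chi> a = 0" for x a
    using \<chi> that unfolding character_def by simp
  moreover have "\<chi> (a + b) = 0" if "a \<in> A" "b \<in> A" "\<chi> a = 0" "\<chi> b = 0" for a b
    using \<chi> that unfolding character_def by simp
  moreover have "\<chi> (c \<cdot>\<^sub>m a) = 0" if "a \<in> A" "\<chi> a = 0" for a c
    using \<chi> that unfolding character_def by simp
  ultimately show ?thesis
    unfolding two_sided_ideal_def
    using subalgebra_zero[OF A] character_zero[OF A \<chi>] subalgebra_add[OF A] subalgebra_mult[OF A]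
      subalgebra_smult[OF A]
    by auto
qed

lemma maximal_ideal_eq_character_kernel:
  assumes A: "subalgebra N A" and \<chi>: "character N A \<chi>" and m: "maximal_ideal N A m"
    and vanish: "\<forall>w\<in>m. \<chi> w = 0"
  shows "m = {w \<in> A. \<chi> w = 0}"
proof -
  have "two_sided_ideal N A m"
    and max: "\<And>J. two_sided_ideal N A J \<Longrightarrow> m \<subseteq> J \<Longrightarrow> J = m \<or> J = A"
    using m unfolding maximal_ideal_def by blast+
  then have "m \<subseteq> {w \<in> A. \<chi> w = 0}" using vanish unfolding two_sided_ideal_def by blast
  moreover have "1\<^sub>m N \<notin> {w \<in> A. \<chi> w = 0}"
    using \<chi> unfolding character_def by simp
  ultimately show ?thesis
    using max[OF character_kernel_ideal[OF A \<chi>]] subalgebra_one[OF A] by blast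
qed

lemma subalgebra_eq_scalars_plus_kernel:
  assumes A: "subalgebra N A" and \<chi>: "character N A \<chi>"
  shows "A = {c \<cdot>\<^sub>m 1\<^sub>m N + w | c w. w \<in> A \<and> \<chi> w = 0}"
proof (intro equalityI subsetI)
  fix z assume z: "z \<in> A"
  define w where "w = z + (- \<chi> z) \<cdot>\<^sub>m 1\<^sub>m N"
  have w: "w \<in> A"
    unfolding w_def by (intro subalgebra_add[OF A] subalgebra_smult[OF A] z subalgebra_one[OF A])
  have "\<chi> w = \<chi> z + (- \<chi> z) * \<chi> (1\<^sub>m N)"
    using \<chi> z subalgebra_one[OF A] subalgebra_smult[OF A] unfolding w_def character_def by metis
  then have "\<chi> w = 0" using \<chi> unfolding character_def by simp
  moreover have "z = \<chi> z \<cdot>\<^sub>m 1\<^sub>m N + w"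
    unfolding w_def using subalgebra_carrier[OF A z] by (intro eq_matI) auto
  ultimately show "z \<in> {c \<cdot>\<^sub>m 1\<^sub>m N + w | c w. w \<in> A \<and> \<chi> w = 0}" using w by blast
next
  fix z assume "z \<in> {c \<cdot>\<^sub>m 1\<^sub>m N + w | c w. w \<in> A \<and> \<chi> w = 0}"
  then obtain c w where "z = c \<cdot>\<^sub>m 1\<^sub>m N + w" "w \<in> A" by blast
  then show "z \<in> A" by (metis A subalgebra_add subalgebra_one subalgebra_smult)
qed

definition alg_iso_map ::
  "nat \<Rightarrow> complex mat set \<Rightarrow> complex mat set \<Rightarrow> (complex mat \<Rightarrow> complex mat) \<Rightarrow> bool" where
  "alg_iso_map N A B \<phi> \<longleftrightarrow> bij_betw \<phi> A B \<and> \<phi> (1\<^sub>m N) = 1\<^sub>m N \<and>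
     (\<forall>x\<in>A. \<forall>y\<in>A. \<phi> (x + y) = \<phi> x + \<phi> y \<and> \<phi> (x * y) = \<phi> x * \<phi> y) \<and>
     (\<forall>c. \<forall>x\<in>A. \<phi> (c \<cdot>\<^sub>m x) = c \<cdot>\<^sub>m \<phi> x)"

lemma alg_iso_iff: "alg_iso N A B \<longleftrightarrow> (\<exists>\<phi>. alg_iso_map N A B \<phi>)"
  unfolding alg_iso_def alg_iso_map_def ..

lemma tautological_algebra_conj_shape:
  assumes "tautological_algebra n A"
  obtains Q Qi where "Q \<in> carrier_mat (2*n+2) (2*n+2)" "Qi \<in> carrier_mat (2*n+2) (2*n+2)"
    "Q * Qi = 1\<^sub>m (2*n+2)" "Qi * Q = 1\<^sub>m (2*n+2)" "subalgebra (2*n+2) A"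
    "\<And>z. z \<in> A \<Longrightarrow> taut_shape (2*n+1) (Qi * z * Q)"
proof -
  obtain \<rho> where ts: "taut_structure n \<rho>" and A: "A = assoc_alg n \<rho>"
    using assms unfolding tautological_algebra_def by blast
  have \<rho>: "\<rho> g \<in> carrier_mat (2*n+2) (2*n+2)" if "g \<in> heis n" for g
    using ts that unfolding taut_structure_def heis_structure_def Let_def by blast
  obtain Q Qi L where Q: "Q \<in> carrier_mat (2*n+2) (2*n+2)" and Qi: "Qi \<in> carrier_mat (2*n+2) (2*n+2)"
    and QQi: "Q * Qi = 1\<^sub>m (2*n+2)" and QiQ: "Qi * Q = 1\<^sub>m (2*n+2)"
    and R: "\<forall>g \<in> heis n. (\<forall>i < 2*n+2-1. (Qi * \<rho> g * Q) $$ (i, 2*n+2-1) = 0) \<and>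
      (\<exists>c. c \<noteq> 0 \<and> (\<forall>i < 2*n+2-1. \<forall>j < 2*n+2-1.
         (Qi * \<rho> g * Q) $$ (i,j) = c * taut_mat n (L *\<^sub>v fst g) $$ (i,j)))"
    using ts unfolding taut_structure_def Let_def by blast
  have gen: "taut_shape (2*n+1) (Qi * \<rho> g * Q)" if g: "g \<in> heis n" for g
  proof -
    have k: "2*n+2-1 = 2*n+1" by simp
    obtain c where block: "\<forall>i < 2*n+1. \<forall>j < 2*n+1.
        (Qi * \<rho> g * Q) $$ (i,j) = c * taut_mat n (L *\<^sub>v fst g) $$ (i,j)"
      using R g unfolding k by blast
    have last_col: "\<forall>i < 2*n+1. (Qi * \<rho> g * Q) $$ (i, 2*n+1) = 0"
      using R g unfolding k by blast
    have "Qi * \<rho> g * Q \<in> carrier_mat (Suc (2*n+1)) (Suc (2*n+1))"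
      using mult_carrier_mat[OF mult_carrier_mat[OF Qi \<rho>[OF g]] Q] by simp
    from taut_shape_of_taut_mat[OF this _ last_col block] show ?thesis by simp
  qed
  let ?S = "{c \<cdot>\<^sub>m \<rho> g | c g. c \<noteq> 0 \<and> g \<in> heis n}"
  have sub: "subalgebra (2*n+2) (alg_gen (2*n+2) ?S)"
    by (rule subalgebra_alg_gen) (use \<rho> in auto)
  have shape: "taut_shape (2*n+1) (Qi * z * Q)" if "z \<in> alg_gen (2*n+2) ?S" for z
    using that
  proof induction
    case ag_one
    have "Qi * 1\<^sub>m (2*n+2) * Q = 1\<^sub>m (Suc (2*n+1))" using conj_mat_one[OF Q Qi QQi QiQ] by simp
    then show ?case using taut_shape_one[of "2*n+1"] by simp
  next
    case (ag_gen a)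
    then obtain c g where a: "a = c \<cdot>\<^sub>m \<rho> g" and g: "g \<in> heis n" by blast
    show ?case
      unfolding a conj_mat_smult[OF Q Qi QQi QiQ \<rho>[OF g]] by (rule taut_shape_smult[OF gen[OF g]])
  next
    case (ag_add a b)
    then have ab: "a \<in> carrier_mat (2*n+2) (2*n+2)" "b \<in> carrier_mat (2*n+2) (2*n+2)"
      using subalgebra_carrier[OF sub] by blast+
    show ?case
      unfolding conj_mat_add[OF Q Qi QQi QiQ ab] by (rule taut_shape_add[OF ag_add.IH])
  next
    case (ag_smult a c)
    then have ab: "a \<in> carrier_mat (2*n+2) (2*n+2)" using subalgebra_carrier[OF sub] by blast
    show ?case
      unfolding conj_mat_smult[OF Q Qi QQi QiQ ab] by (rule taut_shape_smult[OF ag_smult.IH])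
  next
    case (ag_mult a b)
    then have ab: "a \<in> carrier_mat (2*n+2) (2*n+2)" "b \<in> carrier_mat (2*n+2) (2*n+2)"
      using subalgebra_carrier[OF sub] by blast+
    show ?case
      unfolding conj_mat_mult[OF Q Qi QQi QiQ ab] by (rule taut_shape_mult[OF ag_mult.IH]) simp
  qed
  show ?thesis
  proof (rule that[OF Q Qi QQi QiQ])
    show "subalgebra (2*n+2) A" unfolding A assoc_alg_def by (rule sub)
    show "taut_shape (2*n+1) (Qi * z * Q)" if "z \<in> A" for z
      using that unfolding A assoc_alg_def by (rule shape)
  qed
qed

lemma taut_corner_character:
  assumes Q: "Q \<in> carrier_mat (Suc k) (Suc k)" and Qi: "Qi \<in> carrier_mat (Suc k) (Suc k)"
    and QQi: "Q * Qi = 1\<^sub>m (Suc k)" and QiQ: "Qi * Q = 1\<^sub>m (Suc k)"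
    and A: "subalgebra (Suc k) A" and shape: "\<And>z. z \<in> A \<Longrightarrow> taut_shape k (Qi * z * Q)"
    and k: "0 < k" and i: "i = 0 \<or> i = k"
  shows "character (Suc k) A (\<lambda>z. (Qi * z * Q) $$ (i,i))"
  unfolding character_def
proof (intro conjI ballI allI)
  show "(Qi * 1\<^sub>m (Suc k) * Q) $$ (i,i) = 1" using conj_mat_one[OF Q Qi QQi QiQ] i by auto
next
  fix x y assume x: "x \<in> A" and y: "y \<in> A"
  have xc: "x \<in> carrier_mat (Suc k) (Suc k)" and yc: "y \<in> carrier_mat (Suc k) (Suc k)"
    using subalgebra_carrier[OF A] x y by auto
  show "(Qi * (x + y) * Q) $$ (i,i) = (Qi * x * Q) $$ (i,i) + (Qi * y * Q) $$ (i,i)"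
    using conj_mat_add[OF Q Qi QQi QiQ xc yc] Q Qi yc i by auto
  show "(Qi * (x * y) * Q) $$ (i,i) = (Qi * x * Q) $$ (i,i) * (Qi * y * Q) $$ (i,i)"
    using conj_mat_mult[OF Q Qi QQi QiQ xc yc] taut_shape_corner_mult[OF shape[OF x] shape[OF y] k] i
    by auto
next
  fix c x assume x: "x \<in> A"
  then have xc: "x \<in> carrier_mat (Suc k) (Suc k)" using subalgebra_carrier[OF A] by auto
  show "(Qi * (c \<cdot>\<^sub>m x) * Q) $$ (i,i) = c * (Qi * x * Q) $$ (i,i)"
    using conj_mat_smult[OF Q Qi QQi QiQ xc] Q Qi xc i by auto
qed

lemma tautological_algebra_characters:
  assumes "tautological_algebra n A"
  obtains \<chi> \<psi> where "subalgebra (2*n+2) A" "character (2*n+2) A \<chi>" "character (2*n+2) A \<psi>"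
    "\<And>a b c. {a, b, c} \<subseteq> {w \<in> A. \<chi> w = 0 \<and> \<psi> w = 0} \<Longrightarrow> a * b * c = 0\<^sub>m (2*n+2) (2*n+2)"
proof -
  have N: "Suc (2*n+1) = 2*n+2" by simp
  obtain Q Qi where Q: "Q \<in> carrier_mat (2*n+2) (2*n+2)" and Qi: "Qi \<in> carrier_mat (2*n+2) (2*n+2)"
    and QQi: "Q * Qi = 1\<^sub>m (2*n+2)" and QiQ: "Qi * Q = 1\<^sub>m (2*n+2)" and A: "subalgebra (2*n+2) A"
    and shape: "\<And>z. z \<in> A \<Longrightarrow> taut_shape (2*n+1) (Qi * z * Q)"
    using tautological_algebra_conj_shape[OF assms] by blast
  let ?\<chi> = "\<lambda>z. (Qi * z * Q) $$ (0,0)" and ?\<psi> = "\<lambda>z. (Qi * z * Q) $$ (2*n+1, 2*n+1)"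
  note corner = taut_corner_character[of Q "2*n+1" Qi A, unfolded N, OF Q Qi QQi QiQ A shape]
  have \<chi>: "character (2*n+2) A ?\<chi>" by (rule corner) simp_all
  have \<psi>: "character (2*n+2) A ?\<psi>" by (rule corner) simp_all
  have cube: "a * b * c = 0\<^sub>m (2*n+2) (2*n+2)"
    if abc: "{a, b, c} \<subseteq> {w \<in> A. ?\<chi> w = 0 \<and> ?\<psi> w = 0}" for a b c
  proof -
    have nil: "lowers_level (taut_level (2*n+1)) 1 (Qi * w * Q)"
      and carr: "w \<in> carrier_mat (2*n+2) (2*n+2)" if "w \<in> {a, b, c}" for w
    proof -
      have w: "w \<in> A" "?\<chi> w = 0" "?\<psi> w = 0" using abc that by auto
      show "lowers_level (taut_level (2*n+1)) 1 (Qi * w * Q)"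
        by (rule taut_shape_nil[OF shape]) (use w in auto)
      show "w \<in> carrier_mat (2*n+2) (2*n+2)" by (rule subalgebra_carrier[OF A w(1)])
    qed
    have conj_carr: "Qi * w * Q \<in> carrier_mat (2*n+2) (2*n+2)" if "w \<in> {a, b, c}" for w
      using carr[OF that] Q Qi by simp
    have a: "a \<in> carrier_mat (2*n+2) (2*n+2)" and b: "b \<in> carrier_mat (2*n+2) (2*n+2)"
      and c: "c \<in> carrier_mat (2*n+2) (2*n+2)" using carr by auto
    have "Qi * (a * b * c) * Q = (Qi * a * Q) * (Qi * b * Q) * (Qi * c * Q)"
      unfolding conj_mat_mult[OF Q Qi QQi QiQ mult_carrier_mat[OF a b] c]
        conj_mat_mult[OF Q Qi QQi QiQ a b] ..
    also have "\<dots> = 0\<^sub>m (2*n+2) (2*n+2)"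
      by (rule taut_nil_product_eq_0[OF nil nil nil conj_carr conj_carr conj_carr]) auto
    finally show ?thesis
      by (rule conj_mat_eq_0[OF Q Qi QQi QiQ mult_carrier_mat[OF mult_carrier_mat[OF a b] c]])
  qed
  show ?thesis by (rule that[OF A \<chi> \<psi> cube])
qed

definition symp_mat :: "nat \<Rightarrow> complex mat" where
  "symp_mat n = mat (2*n) (2*n) (\<lambda>(i,j). omega n i j)"

lemma symp_mat_mult_vec_index:
  assumes v: "v \<in> carrier_vec (2*n)" and i: "i < 2*n"
  shows "(symp_mat n *\<^sub>v v) $ i = (if i < n then v $ (i + n) else - v $ (i - n))"
proof -
  let ?j = "if i < n then i + n else i - n"
  have "(symp_mat n *\<^sub>v v) $ i = (\<Sum>j<2*n. omega n i j * v $ j)"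
    using v i by (auto simp: symp_mat_def scalar_prod_def lessThan_atLeast0 intro!: sum.cong)
  also have "\<dots> = (\<Sum>j\<in>{?j}. omega n i j * v $ j)"
    by (rule sum.mono_neutral_right) (use i in \<open>auto simp: omega_def\<close>)
  finally show ?thesis using i by (cases "i < n") (auto simp: omega_def)
qed

lemma symp_mat_mult_vec_eq_0:
  assumes v: "v \<in> carrier_vec (2*n)" and "symp_mat n *\<^sub>v v = 0\<^sub>v (2*n)"
  shows "v = 0\<^sub>v (2*n)"
proof (rule eq_vecI)
  fix j assume "j < dim_vec (0\<^sub>v (2*n) :: complex vec)"
  then have j: "j < 2*n" by simp
  show "v $ j = 0\<^sub>v (2*n) $ j"
  proof (cases "j < n")
    case True
    then have "(symp_mat n *\<^sub>v v) $ (j + n) = - v $ j"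
      using symp_mat_mult_vec_index[OF v, of "j + n"] by simp
    then show ?thesis using assms(2) True j by simp
  next
    case False
    then have "j - n < n" "j - n + n = j" using j by auto
    then have "(symp_mat n *\<^sub>v v) $ (j - n) = v $ j"
      using symp_mat_mult_vec_index[OF v, of "j - n"] by simp
    then show ?thesis using assms(2) False j by simp
  qed
qed (use v in simp)

lemma det_neq_0_of_symp_congruence:
  assumes D: "D \<in> carrier_mat (2*n) (2*n)" and s: "s \<noteq> 0"
    and DSD: "D * symp_mat n * transpose_mat D = s \<cdot>\<^sub>m symp_mat n"
  shows "det D \<noteq> 0"
proof
  assume "det D = 0"
  then have "det (transpose_mat D) = 0" using det_transpose[OF D] by simp
  then obtain v where v: "v \<in> carrier_vec (2*n)" "v \<noteq> 0\<^sub>v (2*n)"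
    and Dv: "transpose_mat D *\<^sub>v v = 0\<^sub>v (2*n)"
    using det_0_iff_vec_prod_zero[of "transpose_mat D" "2*n"] D by auto
  have S: "symp_mat n \<in> carrier_mat (2*n) (2*n)" by (simp add: symp_mat_def)
  have "(s \<cdot>\<^sub>m symp_mat n) *\<^sub>v v = (D * symp_mat n) *\<^sub>v (transpose_mat D *\<^sub>v v)"
    unfolding DSD[symmetric] by (rule assoc_mult_mat_vec) (use D S v in auto)
  also have "\<dots> = D *\<^sub>v (symp_mat n *\<^sub>v (transpose_mat D *\<^sub>v v))"
    by (rule assoc_mult_mat_vec) (use D S v in auto)
  also have "\<dots> = 0\<^sub>v (2*n)" unfolding Dv using D S by (simp add: mult_mat_vec_zero)
  finally have sSv: "(s \<cdot>\<^sub>m symp_mat n) *\<^sub>v v = 0\<^sub>v (2*n)" .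
  have "symp_mat n *\<^sub>v v = 0\<^sub>v (2*n)"
  proof (rule eq_vecI)
    fix i assume "i < dim_vec (0\<^sub>v (2*n) :: complex vec)"
    then have i: "i < 2*n" by simp
    have "s * (symp_mat n *\<^sub>v v) $ i = ((s \<cdot>\<^sub>m symp_mat n) *\<^sub>v v) $ i" using S v i by simp
    then show "(symp_mat n *\<^sub>v v) $ i = 0\<^sub>v (2*n) $ i" using sSv s i by simp
  qed (use S in simp)
  then show False using symp_mat_mult_vec_eq_0[OF v(1)] v(2) by simp
qed

lemma symp_congruence_of_scaled_congruence:
  fixes D M1 M2 :: "complex mat"
  assumes D: "D \<in> carrier_mat (2*n) (2*n)" and M1: "M1 \<in> carrier_mat (2*n) (2*n)"
    and M2: "M2 \<in> carrier_mat (2*n) (2*n)"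
    and DMD: "D * M2 * transpose_mat D = s \<cdot>\<^sub>m M1"
    and skew1: "M1 - transpose_mat M1 = symp_mat n" and skew2: "M2 - transpose_mat M2 = symp_mat n"
  shows "D * symp_mat n * transpose_mat D = s \<cdot>\<^sub>m symp_mat n"
proof -
  have DM2: "D * M2 \<in> carrier_mat (2*n) (2*n)" using D M2 by simp
  have "D * transpose_mat M2 * transpose_mat D = D * (transpose_mat M2 * transpose_mat D)"
    by (rule assoc_mult_mat) (use D M2 in auto)
  also have "\<dots> = transpose_mat (transpose_mat D) * transpose_mat (D * M2)"
    using transpose_mult[OF D M2] by simp
  also have "\<dots> = transpose_mat (D * M2 * transpose_mat D)"
    by (rule transpose_mult[symmetric]) (use DM2 D in auto)
  also have "\<dots> = s \<cdot>\<^sub>m transpose_mat M1" unfolding DMD transpose_smult_mat ..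
  finally have DMtD: "D * transpose_mat M2 * transpose_mat D = s \<cdot>\<^sub>m transpose_mat M1" .
  have "D * symp_mat n * transpose_mat D =
      D * M2 * transpose_mat D - D * transpose_mat M2 * transpose_mat D"
    unfolding skew2[symmetric] using D M2
    by (simp add: mult_minus_distrib_mat[of _ "2*n" "2*n"] minus_mult_distrib_mat[of _ "2*n" "2*n"])
  also have "\<dots> = s \<cdot>\<^sub>m (M1 - transpose_mat M1)"
    unfolding DMD DMtD using M1 by (intro eq_matI) (auto simp: algebra_simps)
  finally show ?thesis unfolding skew1 .
qed

lemma congruence_of_scaled_congruence:
  fixes D M1 M2 :: "complex mat"
  assumes D: "D \<in> carrier_mat k k" and det: "det D \<noteq> 0" and s: "s \<noteq> 0"
    and M2: "M2 \<in> carrier_mat k k" and DMD: "D * M2 * transpose_mat D = s \<cdot>\<^sub>m M1"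
  shows "\<exists>C \<in> carrier_mat k k. invertible_mat C \<and> M1 = C * M2 * transpose_mat C"
proof -
  define r where "r = csqrt s"
  have r: "r * r = s" unfolding r_def using power2_csqrt[of s] by (simp add: power2_eq_square)
  then have r0: "r \<noteq> 0" using s by auto
  define C where "C = (1 / r) \<cdot>\<^sub>m D"
  have C: "C \<in> carrier_mat k k" unfolding C_def using D by simp
  have "invertible_mat C"
    by (rule invertible_mat_of_det_neq_0[OF C]) (use D det r0 in \<open>simp add: C_def\<close>)
  have DT: "transpose_mat D \<in> carrier_mat k k" using D by simp
  have "C * M2 * transpose_mat C = (1 / r) \<cdot>\<^sub>m ((D * M2) * ((1 / r) \<cdot>\<^sub>m transpose_mat D))"
    unfolding C_def transpose_smult_mat
    by (simp add: mult_smult_assoc_mat[OF D M2]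
        mult_smult_assoc_mat[OF mult_carrier_mat[OF D M2] smult_carrier_mat[OF DT]])
  also have "\<dots> = ((1 / r) * (1 / r) * s) \<cdot>\<^sub>m M1"
    using D M2 by (simp add: mult_smult_distrib[of _ k k _ k] DMD smult_smult_mat mult.assoc)
  also have "(1 / r) * (1 / r) * s = 1" using r r0 s by (simp add: field_simps)
  finally show ?thesis using C \<open>invertible_mat C\<close> by auto
qed

section \<open>Algebras with a Heisenberg basis\<close>

definition lin_comb :: "nat \<Rightarrow> (nat \<Rightarrow> complex mat) \<Rightarrow> complex vec \<Rightarrow> complex mat" where
  "lin_comb n X v = msum (2*n+2) (\<lambda>i. v $ i \<cdot>\<^sub>m X i) (2*n)"

definition alg_elem ::
  "nat \<Rightarrow> (nat \<Rightarrow> complex mat) \<Rightarrow> complex mat \<Rightarrow> complex \<Rightarrow> complex vec \<Rightarrow> complex \<Rightarrow> complex mat" where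
  "alg_elem n X t c v d = c \<cdot>\<^sub>m 1\<^sub>m (2*n+2) + lin_comb n X v + d \<cdot>\<^sub>m t"

locale symplectic_ideal =
  fixes n :: nat and m :: "complex mat set" and X :: "nat \<Rightarrow> complex mat" and t :: "complex mat"
  assumes n_pos: "n \<ge> 1" and basis: "symplectic_basis n m X t"
begin

lemma X_carrier: "i < 2*n \<Longrightarrow> X i \<in> carrier_mat (2*n+2) (2*n+2)"
  and t_carrier: "t \<in> carrier_mat (2*n+2) (2*n+2)"
  and basis_indep: "msum (2*n+2) (\<lambda>i. c i \<cdot>\<^sub>m X i) (2*n) + d \<cdot>\<^sub>m t = 0\<^sub>m (2*n+2) (2*n+2) \<Longrightarrow>
    (\<forall>i < 2*n. c i = 0) \<and> d = 0"
  and m_eq: "m = {msum (2*n+2) (\<lambda>i. c i \<cdot>\<^sub>m X i) (2*n) + d \<cdot>\<^sub>m t | c d. True}"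
  and X_commutator: "i < 2*n \<Longrightarrow> j < 2*n \<Longrightarrow> X i * X j - X j * X i = omega n i j \<cdot>\<^sub>m t"
  using basis unfolding symplectic_basis_def Let_def by blast+

lemma X_dim [simp]: "i < 2*n \<Longrightarrow> dim_row (X i) = 2*n+2" "i < 2*n \<Longrightarrow> dim_col (X i) = 2*n+2"
  and t_dim [simp]: "dim_row t = 2*n+2" "dim_col t = 2*n+2"
  using X_carrier t_carrier by auto

lemma lin_comb_carrier: "lin_comb n X v \<in> carrier_mat (2*n+2) (2*n+2)"
  unfolding lin_comb_def by (rule msum_carrier) (use X_carrier in auto)

lemma lin_comb_dim [simp]: "dim_row (lin_comb n X v) = 2*n+2" "dim_col (lin_comb n X v) = 2*n+2"
  using lin_comb_carrier by auto

lemma lin_comb_index: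
  "a < 2*n+2 \<Longrightarrow> b < 2*n+2 \<Longrightarrow> lin_comb n X v $$ (a,b) = (\<Sum>i<2*n. v $ i * X i $$ (a,b))"
  unfolding lin_comb_def by (subst msum_index) (use X_carrier in \<open>auto intro!: sum.cong\<close>)

lemma lin_comb_vec: "lin_comb n X (vec (2*n) c) = msum (2*n+2) (\<lambda>i. c i \<cdot>\<^sub>m X i) (2*n)"
  unfolding lin_comb_def by (rule msum_cong) simp

lemma alg_elem_carrier: "alg_elem n X t c v d \<in> carrier_mat (2*n+2) (2*n+2)"
  unfolding alg_elem_def using lin_comb_carrier t_carrier by auto

lemma alg_elem_dim [simp]:
  "dim_row (alg_elem n X t c v d) = 2*n+2" "dim_col (alg_elem n X t c v d) = 2*n+2"
  using alg_elem_carrier by auto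

lemma alg_elem_index:
  "a < 2*n+2 \<Longrightarrow> b < 2*n+2 \<Longrightarrow> alg_elem n X t c v d $$ (a,b) =
     c * (if a = b then 1 else 0) + (\<Sum>i<2*n. v $ i * X i $$ (a,b)) + d * t $$ (a,b)"
  unfolding alg_elem_def by (simp add: lin_comb_index)

lemma alg_elem_0: "alg_elem n X t 0 v d = lin_comb n X v + d \<cdot>\<^sub>m t"
  by (rule eq_matI) (auto simp: alg_elem_index lin_comb_index)

lemma alg_elem_scalar_plus: "alg_elem n X t c v d = c \<cdot>\<^sub>m 1\<^sub>m (2*n+2) + alg_elem n X t 0 v d"
  by (rule eq_matI) (auto simp: alg_elem_index)

lemma alg_elem_add:
  "v \<in> carrier_vec (2*n) \<Longrightarrow> v' \<in> carrier_vec (2*n) \<Longrightarrow>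
   alg_elem n X t c v d + alg_elem n X t c' v' d' = alg_elem n X t (c + c') (v + v') (d + d')"
  by (rule eq_matI) (auto simp: alg_elem_index algebra_simps sum.distrib)

lemma alg_elem_smult:
  "v \<in> carrier_vec (2*n) \<Longrightarrow> a \<cdot>\<^sub>m alg_elem n X t c v d = alg_elem n X t (a * c) (a \<cdot>\<^sub>v v) (a * d)"
  by (rule eq_matI) (auto simp: alg_elem_index algebra_simps sum_distrib_left)

lemma alg_elem_diff:
  "v \<in> carrier_vec (2*n) \<Longrightarrow> v' \<in> carrier_vec (2*n) \<Longrightarrow>
   alg_elem n X t c v d - alg_elem n X t c' v' d' = alg_elem n X t (c - c') (v - v') (d - d')"
  by (rule eq_matI) (auto simp: alg_elem_index algebra_simps sum_subtractf)

lemma smult_t_eq: "d \<cdot>\<^sub>m t = alg_elem n X t 0 (0\<^sub>v (2*n)) d"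
  by (rule eq_matI) (auto simp: alg_elem_index)

lemma X_eq:
  assumes i: "i < 2*n"
  shows "X i = alg_elem n X t 0 (unit_vec (2*n) i) 0"
proof (rule eq_matI)
  fix a b assume ab: "a < dim_row (alg_elem n X t 0 (unit_vec (2*n) i) 0)"
    "b < dim_col (alg_elem n X t 0 (unit_vec (2*n) i) 0)"
  have "(\<Sum>l<2*n. unit_vec (2*n) i $ l * X l $$ (a,b)) = (\<Sum>l\<in>{i}. unit_vec (2*n) i $ l * X l $$ (a,b))"
    by (rule sum.mono_neutral_right) (use i in auto)
  then show "X i $$ (a,b) = alg_elem n X t 0 (unit_vec (2*n) i) 0 $$ (a,b)"
    using ab i by (simp add: alg_elem_index)
qed (use i in auto)

lemma m_iff: "w \<in> m \<longleftrightarrow> (\<exists>v d. v \<in> carrier_vec (2*n) \<and> w = alg_elem n X t 0 v d)"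
proof
  assume "w \<in> m"
  then obtain c d where "w = msum (2*n+2) (\<lambda>i. c i \<cdot>\<^sub>m X i) (2*n) + d \<cdot>\<^sub>m t"
    unfolding m_eq by blast
  then have "w = alg_elem n X t 0 (vec (2*n) c) d" by (simp add: alg_elem_0 lin_comb_vec)
  then show "\<exists>v d. v \<in> carrier_vec (2*n) \<and> w = alg_elem n X t 0 v d" using vec_carrier by blast
next
  assume "\<exists>v d. v \<in> carrier_vec (2*n) \<and> w = alg_elem n X t 0 v d"
  then obtain v d where "w = alg_elem n X t 0 v d" by blast
  then have "w = msum (2*n+2) (\<lambda>i. v $ i \<cdot>\<^sub>m X i) (2*n) + d \<cdot>\<^sub>m t"
    by (simp add: alg_elem_0 lin_comb_def)
  then show "w \<in> m" unfolding m_eq by blast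
qed

lemma X_in_m: "i < 2*n \<Longrightarrow> X i \<in> m"
  unfolding m_iff using X_eq unit_vec_carrier by blast

lemma t_eq: "t = alg_elem n X t 0 (0\<^sub>v (2*n)) 1"
  using smult_t_eq[of 1] by simp

lemma t_in_m: "t \<in> m"
  unfolding m_iff using t_eq zero_carrier_vec by blast

lemma alg_elem_0_eq_0:
  assumes v: "v \<in> carrier_vec (2*n)" and "alg_elem n X t 0 v d = 0\<^sub>m (2*n+2) (2*n+2)"
  shows "v = 0\<^sub>v (2*n) \<and> d = 0"
proof -
  have "msum (2*n+2) (\<lambda>i. v $ i \<cdot>\<^sub>m X i) (2*n) + d \<cdot>\<^sub>m t = 0\<^sub>m (2*n+2) (2*n+2)"
    using assms(2) unfolding alg_elem_0 lin_comb_def .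
  from basis_indep[OF this] show ?thesis using v by auto
qed

lemma t_eq_commutator: "t = X 0 * X n - X n * X 0"
proof -
  have "X 0 * X n - X n * X 0 = omega n 0 n \<cdot>\<^sub>m t" using X_commutator[of 0 n] n_pos by simp
  then show ?thesis using n_pos by (simp add: omega_def)
qed

lemma t_neq_0: "t \<noteq> 0\<^sub>m (2*n+2) (2*n+2)"
proof
  assume "t = 0\<^sub>m (2*n+2) (2*n+2)"
  then have "alg_elem n X t 0 (0\<^sub>v (2*n)) 1 = 0\<^sub>m (2*n+2) (2*n+2)" using t_eq by simp
  from alg_elem_0_eq_0[OF zero_carrier_vec this] show False by simp
qed

lemma smult_t_inj:
  assumes eq: "a \<cdot>\<^sub>m t = b \<cdot>\<^sub>m t"
  shows "a = b"
proof -
  have "\<exists>i<2*n+2. \<exists>j<2*n+2. t $$ (i,j) \<noteq> 0"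
    using t_neq_0 by (metis eq_matI index_zero_mat t_dim)
  then obtain i j where ij: "i < 2*n+2" "j < 2*n+2" "t $$ (i,j) \<noteq> 0" by blast
  have "a * t $$ (i,j) = b * t $$ (i,j)" using arg_cong[OF eq, of "\<lambda>A. A $$ (i,j)"] ij by simp
  then show "a = b" using ij by simp
qed

lemma structure_matrix_skew:
  assumes M: "structure_matrix n X t M"
  shows "M - transpose_mat M = symp_mat n"
proof -
  have Mc: "M \<in> carrier_mat (2*n) (2*n)"
    and XX: "\<And>i j. i < 2*n \<Longrightarrow> j < 2*n \<Longrightarrow> X i * X j = M $$ (i,j) \<cdot>\<^sub>m t"
    using M unfolding structure_matrix_def by blast+
  have "M $$ (i,j) - M $$ (j,i) = omega n i j" if i: "i < 2*n" and j: "j < 2*n" for i j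
  proof (rule smult_t_inj)
    have "(M $$ (i,j) - M $$ (j,i)) \<cdot>\<^sub>m t = M $$ (i,j) \<cdot>\<^sub>m t - M $$ (j,i) \<cdot>\<^sub>m t"
      by (rule eq_matI) (auto simp: algebra_simps)
    also have "\<dots> = omega n i j \<cdot>\<^sub>m t" using X_commutator[OF i j] XX[OF i j] XX[OF j i] by simp
    finally show "(M $$ (i,j) - M $$ (j,i)) \<cdot>\<^sub>m t = omega n i j \<cdot>\<^sub>m t" .
  qed
  then show ?thesis using Mc by (intro eq_matI) (auto simp: symp_mat_def)
qed

lemma character_vanishes:
  assumes A: "subalgebra (2*n+2) A" and \<chi>: "character (2*n+2) A \<chi>" and mA: "m \<subseteq> A"
    and M: "structure_matrix n X t M" and w: "w \<in> m"
  shows "\<chi> w = 0"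
proof -
  have XA: "\<And>i. i < 2*n \<Longrightarrow> X i \<in> A" using X_in_m mA by blast
  have tA: "t \<in> A" using t_in_m mA by blast
  have add: "\<And>x y. x \<in> A \<Longrightarrow> y \<in> A \<Longrightarrow> \<chi> (x + y) = \<chi> x + \<chi> y"
    and mult: "\<And>x y. x \<in> A \<Longrightarrow> y \<in> A \<Longrightarrow> \<chi> (x * y) = \<chi> x * \<chi> y"
    and smult: "\<And>c x. x \<in> A \<Longrightarrow> \<chi> (c \<cdot>\<^sub>m x) = c * \<chi> x"
    using \<chi> unfolding character_def by blast+
  have n: "0 < 2*n" "n < 2*n" using n_pos by auto
  have "X 0 * X n = t + X n * X 0"
    using X_carrier n by (subst t_eq_commutator) (intro eq_matI; auto)
  then have "\<chi> (X 0) * \<chi> (X n) = \<chi> t + \<chi> (X n) * \<chi> (X 0)"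
    by (metis XA add mult n subalgebra_mult[OF A] tA)
  then have \<chi>t: "\<chi> t = 0" by simp
  have \<chi>X: "\<chi> (X i) = 0" if i: "i < 2*n" for i
  proof -
    have "\<chi> (X i) * \<chi> (X i) = \<chi> (M $$ (i,i) \<cdot>\<^sub>m t)"
      using mult[OF XA XA, OF i i] M i unfolding structure_matrix_def by simp
    then show ?thesis using smult[OF tA] \<chi>t by simp
  qed
  obtain c d where w_eq: "w = msum (2*n+2) (\<lambda>i. c i \<cdot>\<^sub>m X i) (2*n) + d \<cdot>\<^sub>m t"
    using w m_eq by blast
  have "msum (2*n+2) (\<lambda>i. c i \<cdot>\<^sub>m X i) (2*n) \<in> {x \<in> A. \<chi> x = 0}"
  proof (rule msum_closed)
    show "0\<^sub>m (2*n+2) (2*n+2) \<in> {x \<in> A. \<chi> x = 0}"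
      using subalgebra_zero[OF A] character_zero[OF A \<chi>] by simp
    show "a + b \<in> {x \<in> A. \<chi> x = 0}" if "a \<in> {x \<in> A. \<chi> x = 0}" "b \<in> {x \<in> A. \<chi> x = 0}" for a b
      using that add subalgebra_add[OF A] by simp
    show "c i \<cdot>\<^sub>m X i \<in> {x \<in> A. \<chi> x = 0}" if "i < 2*n" for i
      using that XA smult \<chi>X subalgebra_smult[OF A] by simp
  qed
  moreover have "d \<cdot>\<^sub>m t \<in> {x \<in> A. \<chi> x = 0}" using tA smult \<chi>t subalgebra_smult[OF A] by simp
  ultimately show ?thesis unfolding w_eq using add by simp
qed

end

(* Unspecified outside the span of 1, the X i and t. *)
definition coords ::
  "nat \<Rightarrow> (nat \<Rightarrow> complex mat) \<Rightarrow> complex mat \<Rightarrow> complex mat \<Rightarrow> complex \<times> complex vec \<times> complex" where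
  "coords n X t z = (SOME (c, v, d). v \<in> carrier_vec (2*n) \<and> z = alg_elem n X t c v d)"

(* The only consequences of tautologicity that the isomorphism criterion needs. *)
locale heis_alg = symplectic_ideal +
  fixes A :: "complex mat set" and M :: "complex mat"
  assumes M_structure: "structure_matrix n X t M"
    and A_eq: "A = {c \<cdot>\<^sub>m 1\<^sub>m (2*n+2) + w | c w. w \<in> m}"
    and one_notin_m: "1\<^sub>m (2*n+2) \<notin> m"
    and m_cube: "\<And>a b c. a \<in> m \<Longrightarrow> b \<in> m \<Longrightarrow> c \<in> m \<Longrightarrow> a * b * c = 0\<^sub>m (2*n+2) (2*n+2)"
begin

lemma M_carrier: "M \<in> carrier_mat (2*n) (2*n)"
  and X_mult_X: "i < 2*n \<Longrightarrow> j < 2*n \<Longrightarrow> X i * X j = M $$ (i,j) \<cdot>\<^sub>m t"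
  using M_structure unfolding structure_matrix_def by blast+

lemma A_iff: "z \<in> A \<longleftrightarrow> (\<exists>c v d. v \<in> carrier_vec (2*n) \<and> z = alg_elem n X t c v d)"
proof
  assume "z \<in> A"
  then obtain c v d where "v \<in> carrier_vec (2*n)" "z = c \<cdot>\<^sub>m 1\<^sub>m (2*n+2) + alg_elem n X t 0 v d"
    unfolding A_eq m_iff by blast
  then show "\<exists>c v d. v \<in> carrier_vec (2*n) \<and> z = alg_elem n X t c v d"
    using alg_elem_scalar_plus by metis
next
  assume "\<exists>c v d. v \<in> carrier_vec (2*n) \<and> z = alg_elem n X t c v d"
  then obtain c v d where "v \<in> carrier_vec (2*n)" "z = alg_elem n X t c v d" by blast
  then show "z \<in> A" unfolding A_eq m_iff using alg_elem_scalar_plus[of c v d] by blast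
qed

lemma alg_elem_in_A: "v \<in> carrier_vec (2*n) \<Longrightarrow> alg_elem n X t c v d \<in> A"
  using A_iff by blast

lemma alg_elem_one: "alg_elem n X t 1 (0\<^sub>v (2*n)) 0 = 1\<^sub>m (2*n+2)"
  by (rule eq_matI) (auto simp: alg_elem_index)

lemma alg_elem_eq_0:
  assumes v: "v \<in> carrier_vec (2*n)" and eq: "alg_elem n X t c v d = 0\<^sub>m (2*n+2) (2*n+2)"
  shows "c = 0 \<and> v = 0\<^sub>v (2*n) \<and> d = 0"
proof -
  have "c = 0"
  proof (rule ccontr)
    assume c: "c \<noteq> 0"
    have "1\<^sub>m (2*n+2) = (- 1 / c) \<cdot>\<^sub>m alg_elem n X t 0 v d"
    proof (rule eq_matI)
      fix a b assume ab: "a < dim_row ((- 1 / c) \<cdot>\<^sub>m alg_elem n X t 0 v d)"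
        "b < dim_col ((- 1 / c) \<cdot>\<^sub>m alg_elem n X t 0 v d)"
      have "alg_elem n X t c v d $$ (a,b) =
          c * (if a = b then 1 else 0) + alg_elem n X t 0 v d $$ (a,b)"
        using ab by (simp add: alg_elem_index)
      then have "c * (if a = b then 1 else 0) + alg_elem n X t 0 v d $$ (a,b) = 0"
        using arg_cong[OF eq, of "\<lambda>B. B $$ (a,b)"] ab by simp
      then show "1\<^sub>m (2*n+2) $$ (a,b) = ((- 1 / c) \<cdot>\<^sub>m alg_elem n X t 0 v d) $$ (a,b)"
        using ab c by (simp add: field_simps add_eq_0_iff)
    qed auto
    also have "\<dots> = alg_elem n X t 0 ((- 1 / c) \<cdot>\<^sub>v v) ((- 1 / c) * d)"
      using alg_elem_smult[OF v] by simp
    also have "\<dots> \<in> m" unfolding m_iff using v smult_carrier_vec by blast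
    finally show False using one_notin_m by simp
  qed
  then show ?thesis using alg_elem_0_eq_0[OF v] eq by simp
qed

lemma alg_elem_inj:
  assumes v: "v \<in> carrier_vec (2*n)" and v': "v' \<in> carrier_vec (2*n)"
    and eq: "alg_elem n X t c v d = alg_elem n X t c' v' d'"
  shows "c = c' \<and> v = v' \<and> d = d'"
proof -
  have "alg_elem n X t (c - c') (v - v') (d - d') = 0\<^sub>m (2*n+2) (2*n+2)"
    using alg_elem_diff[OF v v', of c d c' d'] eq minus_r_inv_mat[OF alg_elem_carrier] by simp
  from alg_elem_eq_0[OF _ this] v v' have "c - c' = 0" "v - v' = 0\<^sub>v (2*n)" "d - d' = 0" by auto
  moreover have "v = v'"
  proof (rule eq_vecI)
    fix i assume "i < dim_vec v'"
    then have "(v - v') $ i = 0" "i < 2*n" using \<open>v - v' = 0\<^sub>v (2*n)\<close> v' by auto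
    then show "v $ i = v' $ i" using v v' by simp
  qed (use v v' in simp)
  ultimately show ?thesis by simp
qed

lemma m_mult_t:
  assumes w: "w \<in> m"
  shows "w * t = 0\<^sub>m (2*n+2) (2*n+2)" and "t * w = 0\<^sub>m (2*n+2) (2*n+2)"
proof -
  have n: "0 < 2*n" "n < 2*n" using n_pos by auto
  have X0: "X 0 \<in> carrier_mat (2*n+2) (2*n+2)" "X 0 \<in> m"
    and Xn: "X n \<in> carrier_mat (2*n+2) (2*n+2)" "X n \<in> m"
    using X_carrier X_in_m n by auto
  have wc: "w \<in> carrier_mat (2*n+2) (2*n+2)" using w alg_elem_carrier unfolding m_iff by blast
  have "w * t = w * (X 0 * X n) - w * (X n * X 0)"
    unfolding t_eq_commutator by (rule mult_minus_distrib_mat[OF wc]) (use X0 Xn in auto)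
  also have "\<dots> = w * X 0 * X n - w * X n * X 0" using X0 Xn wc by simp
  also have "\<dots> = 0\<^sub>m (2*n+2) (2*n+2)" using m_cube w X0 Xn by simp
  finally show "w * t = 0\<^sub>m (2*n+2) (2*n+2)" .
  have "t * w = X 0 * X n * w - X n * X 0 * w"
    unfolding t_eq_commutator by (rule minus_mult_distrib_mat[OF _ _ wc]) (use X0 Xn in auto)
  also have "\<dots> = 0\<^sub>m (2*n+2) (2*n+2)" using m_cube w X0 Xn by simp
  finally show "t * w = 0\<^sub>m (2*n+2) (2*n+2)" .
qed

lemma X_mult_lin_comb:
  assumes i: "i < 2*n" and v': "v' \<in> carrier_vec (2*n)"
  shows "X i * lin_comb n X v' = (M *\<^sub>v v') $ i \<cdot>\<^sub>m t"
proof -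
  have "X i * lin_comb n X v' = msum (2*n+2) (\<lambda>j. X i * (v' $ j \<cdot>\<^sub>m X j)) (2*n)"
    unfolding lin_comb_def by (rule msum_mult_left) (use X_carrier i in auto)
  also have "\<dots> = msum (2*n+2) (\<lambda>j. (M $$ (i,j) * v' $ j) \<cdot>\<^sub>m t) (2*n)"
  proof (rule msum_cong)
    fix j assume j: "j < 2*n"
    have "X i * (v' $ j \<cdot>\<^sub>m X j) = v' $ j \<cdot>\<^sub>m (X i * X j)"
      by (rule mult_smult_distrib[OF X_carrier[OF i] X_carrier[OF j]])
    then show "X i * (v' $ j \<cdot>\<^sub>m X j) = (M $$ (i,j) * v' $ j) \<cdot>\<^sub>m t"
      using X_mult_X[OF i j] by (simp add: smult_smult_mat mult.commute)
  qed
  also have "\<dots> = (\<Sum>j<2*n. M $$ (i,j) * v' $ j) \<cdot>\<^sub>m t"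
    by (rule msum_smult[OF t_carrier])
  also have "\<dots> = (M *\<^sub>v v') $ i \<cdot>\<^sub>m t"
    using mult_mat_vec_index_sum[OF M_carrier v' i] by simp
  finally show ?thesis .
qed

lemma lin_comb_mult:
  assumes v: "v \<in> carrier_vec (2*n)" and v': "v' \<in> carrier_vec (2*n)"
  shows "lin_comb n X v * lin_comb n X v' = (v \<bullet> (M *\<^sub>v v')) \<cdot>\<^sub>m t"
proof -
  have "lin_comb n X v * lin_comb n X v' = msum (2*n+2) (\<lambda>i. (v $ i \<cdot>\<^sub>m X i) * lin_comb n X v') (2*n)"
    unfolding lin_comb_def[of n X v] by (rule msum_mult_right) (use X_carrier lin_comb_carrier in auto)
  also have "\<dots> = msum (2*n+2) (\<lambda>i. (v $ i * (M *\<^sub>v v') $ i) \<cdot>\<^sub>m t) (2*n)"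
    by (rule msum_cong)
      (simp add: mult_smult_assoc_mat[OF X_carrier lin_comb_carrier] X_mult_lin_comb v' smult_smult_mat)
  also have "\<dots> = (\<Sum>i<2*n. v $ i * (M *\<^sub>v v') $ i) \<cdot>\<^sub>m t"
    by (rule msum_smult[OF t_carrier])
  also have "\<dots> = (v \<bullet> (M *\<^sub>v v')) \<cdot>\<^sub>m t"
    by (simp only: scalar_prod_sum[OF mult_mat_vec_carrier[OF M_carrier v']])
  finally show ?thesis .
qed

lemma alg_elem_0_mult:
  assumes v: "v \<in> carrier_vec (2*n)" and v': "v' \<in> carrier_vec (2*n)"
  shows "alg_elem n X t 0 v d * alg_elem n X t 0 v' d' = (v \<bullet> (M *\<^sub>v v')) \<cdot>\<^sub>m t"
proof -
  let ?E' = "alg_elem n X t 0 v' d'" and ?L = "lin_comb n X v"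
  have E': "?E' \<in> carrier_mat (2*n+2) (2*n+2)" "?E' \<in> m"
    using alg_elem_carrier v' m_iff by blast+
  have "?L = alg_elem n X t 0 v 0"
    unfolding alg_elem_0 using lin_comb_carrier t_carrier by (simp add: smult_zero_left_mat)
  then have L: "?L \<in> m" using v m_iff by blast
  have "alg_elem n X t 0 v d * ?E' = ?L * ?E' + d \<cdot>\<^sub>m (t * ?E')"
    unfolding alg_elem_0[of v d]
    by (simp add: add_mult_distrib_mat[OF lin_comb_carrier smult_carrier_mat[OF t_carrier] E'(1)]
        mult_smult_assoc_mat[OF t_carrier E'(1)])
  also have "?L * ?E' = ?L * lin_comb n X v' + d' \<cdot>\<^sub>m (?L * t)"
    unfolding alg_elem_0[of v' d']
    by (simp add: mult_smult_distrib[OF lin_comb_carrier t_carrier]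
        mult_add_distrib_mat[OF lin_comb_carrier lin_comb_carrier smult_carrier_mat[OF t_carrier]])
  finally show ?thesis
    using m_mult_t(2)[OF E'(2)] m_mult_t(1)[OF L] lin_comb_mult[OF v v'] t_carrier by simp
qed

lemma alg_elem_mult:
  assumes v: "v \<in> carrier_vec (2*n)" and v': "v' \<in> carrier_vec (2*n)"
  shows "alg_elem n X t c v d * alg_elem n X t c' v' d' =
    alg_elem n X t (c * c') (c \<cdot>\<^sub>v v' + c' \<cdot>\<^sub>v v) (c * d' + c' * d + v \<bullet> (M *\<^sub>v v'))"
proof -
  have "alg_elem n X t c v d * alg_elem n X t c' v' d' =
      (c * c') \<cdot>\<^sub>m 1\<^sub>m (2*n+2) + c \<cdot>\<^sub>m alg_elem n X t 0 v' d' + c' \<cdot>\<^sub>m alg_elem n X t 0 v d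
      + (v \<bullet> (M *\<^sub>v v')) \<cdot>\<^sub>m t"
    by (simp only: alg_elem_scalar_plus[of c v d] alg_elem_scalar_plus[of c' v' d']
        scalar_plus_mult[OF alg_elem_carrier alg_elem_carrier] alg_elem_0_mult[OF v v'])
  also have "\<dots> = alg_elem n X t (c * c') (c \<cdot>\<^sub>v v' + c' \<cdot>\<^sub>v v) (c * d' + c' * d + v \<bullet> (M *\<^sub>v v'))"
    using v v' by (intro eq_matI) (auto simp: alg_elem_index algebra_simps sum.distrib sum_distrib_left)
  finally show ?thesis .
qed

lemma subalgebra_A: "subalgebra (2*n+2) A"
  unfolding subalgebra_def
proof (intro conjI ballI allI subsetI)
  fix x assume "x \<in> A"
  then show "x \<in> carrier_mat (2*n+2) (2*n+2)" unfolding A_iff using alg_elem_carrier by blast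
next
  show "1\<^sub>m (2*n+2) \<in> A" using alg_elem_in_A[OF zero_carrier_vec, of 1 0] alg_elem_one by simp
next
  fix x y assume x: "x \<in> A" and y: "y \<in> A"
  obtain c v d where v: "v \<in> carrier_vec (2*n)" "x = alg_elem n X t c v d"
    using x unfolding A_iff by blast
  obtain c' v' d' where v': "v' \<in> carrier_vec (2*n)" "y = alg_elem n X t c' v' d'"
    using y unfolding A_iff by blast
  show "x + y \<in> A" unfolding v(2) v'(2) alg_elem_add[OF v(1) v'(1)]
    using v v' by (intro alg_elem_in_A) simp
  show "x * y \<in> A" unfolding v(2) v'(2) alg_elem_mult[OF v(1) v'(1)]
    using v v' by (intro alg_elem_in_A) simp
next
  fix a x assume x: "x \<in> A"
  obtain c v d where v: "v \<in> carrier_vec (2*n)" "x = alg_elem n X t c v d"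
    using x unfolding A_iff by blast
  show "a \<cdot>\<^sub>m x \<in> A" unfolding v(2) alg_elem_smult[OF v(1)]
    using v by (intro alg_elem_in_A) simp
qed

lemma coords_alg_elem:
  assumes v: "v \<in> carrier_vec (2*n)"
  shows "coords n X t (alg_elem n X t c v d) = (c, v, d)"
proof -
  let ?P = "\<lambda>(c', v', d'). v' \<in> carrier_vec (2*n) \<and> alg_elem n X t c v d = alg_elem n X t c' v' d'"
  have "?P (c, v, d)" using v by simp
  then have P: "?P (coords n X t (alg_elem n X t c v d))" unfolding coords_def by (rule someI)
  obtain c' v' d' where eq: "coords n X t (alg_elem n X t c v d) = (c', v', d')"
    by (cases "coords n X t (alg_elem n X t c v d)")
  then have "v' \<in> carrier_vec (2*n)" "alg_elem n X t c v d = alg_elem n X t c' v' d'" using P by auto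
  from alg_elem_inj[OF v this] show ?thesis using eq by simp
qed

lemma character_scalar_coord: "character (2*n+2) A (\<lambda>z. fst (coords n X t z))"
  unfolding character_def
proof (intro conjI ballI allI)
  show "fst (coords n X t (1\<^sub>m (2*n+2))) = 1"
    using coords_alg_elem[OF zero_carrier_vec, of 1 0] alg_elem_one by simp
next
  fix x y assume x: "x \<in> A" and y: "y \<in> A"
  obtain c v d where v: "v \<in> carrier_vec (2*n)" "x = alg_elem n X t c v d"
    using x unfolding A_iff by blast
  obtain c' v' d' where v': "v' \<in> carrier_vec (2*n)" "y = alg_elem n X t c' v' d'"
    using y unfolding A_iff by blast
  show "fst (coords n X t (x + y)) = fst (coords n X t x) + fst (coords n X t y)"
    unfolding v(2) v'(2) alg_elem_add[OF v(1) v'(1)] using v v' by (simp add: coords_alg_elem)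
  show "fst (coords n X t (x * y)) = fst (coords n X t x) * fst (coords n X t y)"
    unfolding v(2) v'(2) alg_elem_mult[OF v(1) v'(1)] using v v' by (simp add: coords_alg_elem)
next
  fix a x assume "x \<in> A"
  then obtain c v d where v: "v \<in> carrier_vec (2*n)" "x = alg_elem n X t c v d"
    unfolding A_iff by blast
  show "fst (coords n X t (a \<cdot>\<^sub>m x)) = a * fst (coords n X t x)"
    unfolding v(2) alg_elem_smult[OF v(1)] using v by (simp add: coords_alg_elem)
qed

lemma mem_m_of_scalar_coord_0:
  assumes z: "z \<in> A" and "fst (coords n X t z) = 0"
  shows "z \<in> m"
proof -
  obtain c v d where v: "v \<in> carrier_vec (2*n)" and z_eq: "z = alg_elem n X t c v d"
    using z unfolding A_iff by blast
  then have "c = 0" using assms(2) coords_alg_elem by simp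
  then show ?thesis using v z_eq m_iff by blast
qed

end

lemma (in heis_alg) m_subset_A: "m \<subseteq> A"
proof
  fix w assume "w \<in> m"
  then obtain v d where "v \<in> carrier_vec (2*n)" "w = alg_elem n X t 0 v d" unfolding m_iff by blast
  then show "w \<in> A" using alg_elem_in_A by blast
qed

lemma (in symplectic_ideal) heis_alg_of_characters:
  assumes A: "subalgebra (2*n+2) A" and m: "maximal_ideal (2*n+2) A m"
    and M: "structure_matrix n X t M"
    and \<chi>: "character (2*n+2) A \<chi>" and \<psi>: "character (2*n+2) A \<psi>"
    and cube: "\<And>a b c. {a, b, c} \<subseteq> {w \<in> A. \<chi> w = 0 \<and> \<psi> w = 0} \<Longrightarrow>
      a * b * c = 0\<^sub>m (2*n+2) (2*n+2)"
  shows "heis_alg n m X t A M"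
proof -
  have "two_sided_ideal (2*n+2) A m" using m unfolding maximal_ideal_def by simp
  then have mA: "m \<subseteq> A" unfolding two_sided_ideal_def by simp
  have vanish: "\<chi> w = 0 \<and> \<psi> w = 0" if "w \<in> m" for w
    using character_vanishes[OF A \<chi> mA M that] character_vanishes[OF A \<psi> mA M that] by simp
  have m_eq: "m = {w \<in> A. \<chi> w = 0}"
    by (rule maximal_ideal_eq_character_kernel[OF A \<chi> m]) (use vanish in blast)
  show ?thesis
  proof (intro heis_alg.intro[OF symplectic_ideal_axioms] heis_alg_axioms.intro)
    show "structure_matrix n X t M" by (rule M)
    have "A = {c \<cdot>\<^sub>m 1\<^sub>m (2*n+2) + w | c w. w \<in> A \<and> \<chi> w = 0}"
      by (rule subalgebra_eq_scalars_plus_kernel[OF A \<chi>])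
    also have "\<dots> = {c \<cdot>\<^sub>m 1\<^sub>m (2*n+2) + w | c w. w \<in> m}" using m_eq by blast
    finally show "A = {c \<cdot>\<^sub>m 1\<^sub>m (2*n+2) + w | c w. w \<in> m}" .
    show "1\<^sub>m (2*n+2) \<notin> m" using m_eq \<chi> unfolding character_def by simp
    show "a * b * c = 0\<^sub>m (2*n+2) (2*n+2)" if "a \<in> m" "b \<in> m" "c \<in> m" for a b c
      by (rule cube) (use that mA vanish in blast)
  qed
qed

lemma tautological_algebra_heis_alg:
  assumes "n \<ge> 1" and "tautological_algebra n A" and "maximal_ideal (2*n+2) A m"
    and "symplectic_basis n m X t" and "structure_matrix n X t M"
  shows "heis_alg n m X t A M"
proof -
  interpret symplectic_ideal n m X t using assms(1,4) by unfold_locales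
  obtain \<chi> \<psi> where "subalgebra (2*n+2) A" "character (2*n+2) A \<chi>" "character (2*n+2) A \<psi>"
    "\<And>a b c. {a, b, c} \<subseteq> {w \<in> A. \<chi> w = 0 \<and> \<psi> w = 0} \<Longrightarrow> a * b * c = 0\<^sub>m (2*n+2) (2*n+2)"
    using tautological_algebra_characters[OF assms(2)] by blast
  from heis_alg_of_characters[OF this(1) assms(3) assms(5) this(2-4)] show ?thesis .
qed

section \<open>Isomorphisms and congruence of structure matrices\<close>

definition coord_map ::
  "nat \<Rightarrow> (nat \<Rightarrow> complex mat) \<Rightarrow> complex mat \<Rightarrow> (nat \<Rightarrow> complex mat) \<Rightarrow> complex mat \<Rightarrow> complex mat \<Rightarrow>
   complex mat \<Rightarrow> complex mat" where
  "coord_map n X t X' t' P z = (case coords n X t z of (c, v, d) \<Rightarrow> alg_elem n X' t' c (P *\<^sub>v v) d)"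

locale heis_alg_pair = a1: heis_alg n m1 X1 t1 A1 M1 + a2: heis_alg n m2 X2 t2 A2 M2
  for n m1 X1 t1 A1 M1 m2 X2 t2 A2 M2
begin

lemma coord_map_alg_elem:
  "v \<in> carrier_vec (2*n) \<Longrightarrow>
   coord_map n X1 t1 X2 t2 P (alg_elem n X1 t1 c v d) = alg_elem n X2 t2 c (P *\<^sub>v v) d"
  unfolding coord_map_def by (simp add: a1.coords_alg_elem)

lemma coord_map_in_A2:
  assumes P: "P \<in> carrier_mat (2*n) (2*n)" and z: "z \<in> A1"
  shows "coord_map n X1 t1 X2 t2 P z \<in> A2"
proof -
  obtain c v d where v: "v \<in> carrier_vec (2*n)" "z = alg_elem n X1 t1 c v d"
    using z unfolding a1.A_iff by blast
  show ?thesis unfolding v(2) coord_map_alg_elem[OF v(1)] using P v(1) by (intro a2.alg_elem_in_A) simp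
qed

lemma coord_map_hom:
  assumes P: "P \<in> carrier_mat (2*n) (2*n)" and M: "M1 = transpose_mat P * M2 * P"
    and x: "x \<in> A1" and y: "y \<in> A1"
  shows "coord_map n X1 t1 X2 t2 P (x + y) = coord_map n X1 t1 X2 t2 P x + coord_map n X1 t1 X2 t2 P y"
    and "coord_map n X1 t1 X2 t2 P (x * y) = coord_map n X1 t1 X2 t2 P x * coord_map n X1 t1 X2 t2 P y"
    and "coord_map n X1 t1 X2 t2 P (a \<cdot>\<^sub>m x) = a \<cdot>\<^sub>m coord_map n X1 t1 X2 t2 P x"
proof -
  obtain c v d where v: "v \<in> carrier_vec (2*n)" and x_eq: "x = alg_elem n X1 t1 c v d"
    using x unfolding a1.A_iff by blast
  obtain c' v' d' where v': "v' \<in> carrier_vec (2*n)" and y_eq: "y = alg_elem n X1 t1 c' v' d'"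
    using y unfolding a1.A_iff by blast
  have Pv: "P *\<^sub>v v \<in> carrier_vec (2*n)" "P *\<^sub>v v' \<in> carrier_vec (2*n)" using P v v' by auto
  have form: "v \<bullet> (M1 *\<^sub>v v') = (P *\<^sub>v v) \<bullet> (M2 *\<^sub>v (P *\<^sub>v v'))"
  proof -
    let ?w = "M2 *\<^sub>v (P *\<^sub>v v')"
    have w: "?w \<in> carrier_vec (2*n)" using a2.M_carrier P v' by simp
    have "(transpose_mat P * M2 * P) *\<^sub>v v' = (transpose_mat P * M2) *\<^sub>v (P *\<^sub>v v')"
      by (rule assoc_mult_mat_vec) (use P a2.M_carrier v' in auto)
    also have "\<dots> = transpose_mat P *\<^sub>v ?w"
      by (rule assoc_mult_mat_vec) (use P a2.M_carrier v' in auto)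
    finally have "v \<bullet> (M1 *\<^sub>v v') = v \<bullet> (transpose_mat P *\<^sub>v ?w)" unfolding M by simp
    also have "\<dots> = ?w \<bullet> (P *\<^sub>v v)"
      using transpose_vec_mult_scalar[OF P v w] comm_scalar_prod[OF v, of "transpose_mat P *\<^sub>v ?w"] P w
      by simp
    also have "\<dots> = (P *\<^sub>v v) \<bullet> ?w" using comm_scalar_prod[OF w] P v by simp
    finally show ?thesis .
  qed
  show "coord_map n X1 t1 X2 t2 P (x + y) = coord_map n X1 t1 X2 t2 P x + coord_map n X1 t1 X2 t2 P y"
  proof -
    have "coord_map n X1 t1 X2 t2 P (x + y) = alg_elem n X2 t2 (c + c') (P *\<^sub>v (v + v')) (d + d')"
      unfolding x_eq y_eq a1.alg_elem_add[OF v v'] by (rule coord_map_alg_elem) (use v v' in simp)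
    also have "P *\<^sub>v (v + v') = P *\<^sub>v v + P *\<^sub>v v'" using P v v' by (simp add: mult_add_distrib_mat_vec)
    finally show ?thesis
      unfolding x_eq y_eq coord_map_alg_elem[OF v] coord_map_alg_elem[OF v'] a2.alg_elem_add[OF Pv] .
  qed
  show "coord_map n X1 t1 X2 t2 P (x * y) = coord_map n X1 t1 X2 t2 P x * coord_map n X1 t1 X2 t2 P y"
  proof -
    have "coord_map n X1 t1 X2 t2 P (x * y) =
        alg_elem n X2 t2 (c * c') (P *\<^sub>v (c \<cdot>\<^sub>v v' + c' \<cdot>\<^sub>v v)) (c * d' + c' * d + v \<bullet> (M1 *\<^sub>v v'))"
      unfolding x_eq y_eq a1.alg_elem_mult[OF v v'] by (rule coord_map_alg_elem) (use v v' in simp)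
    also have "P *\<^sub>v (c \<cdot>\<^sub>v v' + c' \<cdot>\<^sub>v v) = c \<cdot>\<^sub>v (P *\<^sub>v v') + c' \<cdot>\<^sub>v (P *\<^sub>v v)"
      using P v v' by (simp add: mult_add_distrib_mat_vec mult_mat_vec)
    finally show ?thesis
      unfolding x_eq y_eq coord_map_alg_elem[OF v] coord_map_alg_elem[OF v'] a2.alg_elem_mult[OF Pv] form .
  qed
  show "coord_map n X1 t1 X2 t2 P (a \<cdot>\<^sub>m x) = a \<cdot>\<^sub>m coord_map n X1 t1 X2 t2 P x"
  proof -
    have "coord_map n X1 t1 X2 t2 P (a \<cdot>\<^sub>m x) = alg_elem n X2 t2 (a * c) (P *\<^sub>v (a \<cdot>\<^sub>v v)) (a * d)"
      unfolding x_eq a1.alg_elem_smult[OF v] by (rule coord_map_alg_elem) (use v in simp)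
    also have "P *\<^sub>v (a \<cdot>\<^sub>v v) = a \<cdot>\<^sub>v (P *\<^sub>v v)" using P v by (simp add: mult_mat_vec)
    finally show ?thesis unfolding x_eq coord_map_alg_elem[OF v] a2.alg_elem_smult[OF Pv(1)] .
  qed
qed

lemma coord_map_one:
  assumes P: "P \<in> carrier_mat (2*n) (2*n)"
  shows "coord_map n X1 t1 X2 t2 P (1\<^sub>m (2*n+2)) = 1\<^sub>m (2*n+2)"
proof -
  have "coord_map n X1 t1 X2 t2 P (1\<^sub>m (2*n+2)) = alg_elem n X2 t2 1 (P *\<^sub>v 0\<^sub>v (2*n)) 0"
    using coord_map_alg_elem[OF zero_carrier_vec, of P 1 0] unfolding a1.alg_elem_one .
  also have "P *\<^sub>v 0\<^sub>v (2*n) = 0\<^sub>v (2*n)" using P by (intro eq_vecI) auto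
  finally show ?thesis unfolding a2.alg_elem_one .
qed

lemma alg_iso_of_congruence:
  assumes C: "C \<in> carrier_mat (2*n) (2*n)" and "invertible_mat C"
    and M: "M1 = C * M2 * transpose_mat C"
  shows "alg_iso (2*n+2) A1 A2"
proof -
  interpret b: heis_alg_pair n m2 X2 t2 A2 M2 m1 X1 t1 A1 M1 by unfold_locales
  obtain D where D: "D \<in> carrier_mat (2*n) (2*n)" and CD: "C * D = 1\<^sub>m (2*n)" and DC: "D * C = 1\<^sub>m (2*n)"
    using invertible_matE[OF assms(2) C] by blast
  let ?P = "transpose_mat C" and ?Q = "transpose_mat D"
  have P: "?P \<in> carrier_mat (2*n) (2*n)" and Q: "?Q \<in> carrier_mat (2*n) (2*n)" using C D by auto
  have QP: "?Q * ?P = 1\<^sub>m (2*n)" using transpose_mult[OF C D] CD by simp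
  have PQ: "?P * ?Q = 1\<^sub>m (2*n)" using transpose_mult[OF D C] DC by simp
  let ?\<phi> = "coord_map n X1 t1 X2 t2 ?P" and ?\<psi> = "coord_map n X2 t2 X1 t1 ?Q"
  have \<psi>\<phi>: "?\<psi> (?\<phi> z) = z" if z: "z \<in> A1" for z
  proof -
    obtain c v d where v: "v \<in> carrier_vec (2*n)" "z = alg_elem n X1 t1 c v d"
      using z unfolding a1.A_iff by blast
    have "?Q *\<^sub>v (?P *\<^sub>v v) = v" using assoc_mult_mat_vec[OF Q P v(1)] QP v(1) by simp
    then show ?thesis
      unfolding v(2) coord_map_alg_elem[OF v(1)] b.coord_map_alg_elem[OF mult_mat_vec_carrier[OF P v(1)]]
      by simp
  qed
  have \<phi>\<psi>: "?\<phi> (?\<psi> z) = z" if z: "z \<in> A2" for z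
  proof -
    obtain c v d where v: "v \<in> carrier_vec (2*n)" "z = alg_elem n X2 t2 c v d"
      using z unfolding a2.A_iff by blast
    have "?P *\<^sub>v (?Q *\<^sub>v v) = v" using assoc_mult_mat_vec[OF P Q v(1)] PQ v(1) by simp
    then show ?thesis
      unfolding v(2) b.coord_map_alg_elem[OF v(1)] coord_map_alg_elem[OF mult_mat_vec_carrier[OF Q v(1)]]
      by simp
  qed
  have "bij_betw ?\<phi> A1 A2"
    by (rule bij_betw_byWitness[where f' = ?\<psi>])
      (use \<psi>\<phi> \<phi>\<psi> coord_map_in_A2[OF P] b.coord_map_in_A2[OF Q] in auto)
  moreover have "M1 = transpose_mat ?P * M2 * ?P" using M by simp
  ultimately have "alg_iso_map (2*n+2) A1 A2 ?\<phi>"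
    unfolding alg_iso_map_def using coord_map_one[OF P] coord_map_hom[OF P] by blast
  then show ?thesis unfolding alg_iso_iff by blast
qed

lemma alg_iso_map_maps_m:
  assumes \<phi>: "alg_iso_map (2*n+2) A1 A2 \<phi>" and w: "w \<in> m1"
  shows "\<phi> w \<in> m2"
proof -
  have into: "\<And>x. x \<in> A1 \<Longrightarrow> \<phi> x \<in> A2"
    using \<phi> unfolding alg_iso_map_def bij_betw_def by blast
  have "character (2*n+2) A1 (\<lambda>z. fst (coords n X2 t2 (\<phi> z)))"
    using a2.character_scalar_coord \<phi> into subalgebra_add[OF a1.subalgebra_A]
    unfolding character_def alg_iso_map_def by auto
  from a1.character_vanishes[OF a1.subalgebra_A this a1.m_subset_A a1.M_structure w]
  show ?thesis using a2.mem_m_of_scalar_coord_0 into w a1.m_subset_A by blast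
qed

lemma alg_iso_map_basis_images:
  assumes \<phi>: "alg_iso_map (2*n+2) A1 A2 \<phi>"
  obtains W e s where "\<And>i. i < 2*n \<Longrightarrow> W i \<in> carrier_vec (2*n)"
    and "\<And>i. i < 2*n \<Longrightarrow> \<phi> (X1 i) = alg_elem n X2 t2 0 (W i) (e i)"
    and "\<phi> t1 = s \<cdot>\<^sub>m t2" and "s \<noteq> 0"
proof -
  have inj: "inj_on \<phi> A1"
    and hom: "\<And>x y. x \<in> A1 \<Longrightarrow> y \<in> A1 \<Longrightarrow> \<phi> (x + y) = \<phi> x + \<phi> y \<and> \<phi> (x * y) = \<phi> x * \<phi> y"
    and smult: "\<And>c x. x \<in> A1 \<Longrightarrow> \<phi> (c \<cdot>\<^sub>m x) = c \<cdot>\<^sub>m \<phi> x"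
    and one: "\<phi> (1\<^sub>m (2*n+2)) = 1\<^sub>m (2*n+2)"
    using \<phi> unfolding alg_iso_map_def bij_betw_def by auto
  have XA: "\<And>i. i < 2*n \<Longrightarrow> X1 i \<in> A1" using a1.X_in_m a1.m_subset_A by blast
  have "\<forall>i<2*n. \<exists>w e. w \<in> carrier_vec (2*n) \<and> \<phi> (X1 i) = alg_elem n X2 t2 0 w e"
    using alg_iso_map_maps_m[OF \<phi> a1.X_in_m] unfolding a2.m_iff by blast
  then obtain W e where W: "\<And>i. i < 2*n \<Longrightarrow> W i \<in> carrier_vec (2*n)"
    and \<phi>X: "\<And>i. i < 2*n \<Longrightarrow> \<phi> (X1 i) = alg_elem n X2 t2 0 (W i) (e i)"
    by metis
  have prod: "\<phi> (X1 i * X1 j) = (W i \<bullet> (M2 *\<^sub>v W j)) \<cdot>\<^sub>m t2" if "i < 2*n" "j < 2*n" for i j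
    using hom[OF XA XA, OF that] \<phi>X[OF that(1)] \<phi>X[OF that(2)] a2.alg_elem_0_mult[OF W W, OF that]
    by simp
  define s where "s = W 0 \<bullet> (M2 *\<^sub>v W n) - W n \<bullet> (M2 *\<^sub>v W 0)"
  have n: "0 < 2*n" "n < 2*n" using a1.n_pos by auto
  have "t1 = X1 0 * X1 n + (- 1) \<cdot>\<^sub>m (X1 n * X1 0)"
    using a1.X_carrier n by (subst a1.t_eq_commutator) (intro eq_matI; auto)
  then have "\<phi> t1 = (W 0 \<bullet> (M2 *\<^sub>v W n)) \<cdot>\<^sub>m t2 + (- 1) \<cdot>\<^sub>m ((W n \<bullet> (M2 *\<^sub>v W 0)) \<cdot>\<^sub>m t2)"
    using hom smult subalgebra_mult[OF a1.subalgebra_A] subalgebra_smult[OF a1.subalgebra_A] XA n prod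
    by metis
  then have \<phi>t: "\<phi> t1 = s \<cdot>\<^sub>m t2" unfolding s_def by (intro eq_matI) (auto simp: algebra_simps)
  have "s \<noteq> 0"
  proof
    assume "s = 0"
    have "\<phi> ((0::complex) \<cdot>\<^sub>m 1\<^sub>m (2*n+2)) = (0::complex) \<cdot>\<^sub>m 1\<^sub>m (2*n+2)"
      using smult[OF subalgebra_one[OF a1.subalgebra_A], of 0] one by simp
    then have "\<phi> (0\<^sub>m (2*n+2) (2*n+2)) = \<phi> t1"
      using \<phi>t \<open>s = 0\<close> by (simp add: smult_zero_left_mat)
    then have "t1 = 0\<^sub>m (2*n+2) (2*n+2)"
      using inj_onD[OF inj] subalgebra_zero[OF a1.subalgebra_A] a1.t_in_m a1.m_subset_A by blast
    then show False using a1.t_neq_0 by simp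
  qed
  then show ?thesis using that W \<phi>X \<phi>t by blast
qed

lemma scaled_congruence_of_alg_iso_map:
  assumes \<phi>: "alg_iso_map (2*n+2) A1 A2 \<phi>"
  obtains D s where "D \<in> carrier_mat (2*n) (2*n)" "s \<noteq> 0" "D * M2 * transpose_mat D = s \<cdot>\<^sub>m M1"
proof -
  obtain W e s where W: "\<And>i. i < 2*n \<Longrightarrow> W i \<in> carrier_vec (2*n)"
    and \<phi>X: "\<And>i. i < 2*n \<Longrightarrow> \<phi> (X1 i) = alg_elem n X2 t2 0 (W i) (e i)"
    and \<phi>t: "\<phi> t1 = s \<cdot>\<^sub>m t2" and s: "s \<noteq> 0"
    using alg_iso_map_basis_images[OF \<phi>] by blast
  have XA: "\<And>i. i < 2*n \<Longrightarrow> X1 i \<in> A1" using a1.X_in_m a1.m_subset_A by blast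
  have tA: "t1 \<in> A1" using a1.t_in_m a1.m_subset_A by blast
  have hom: "\<And>x y. x \<in> A1 \<Longrightarrow> y \<in> A1 \<Longrightarrow> \<phi> (x * y) = \<phi> x * \<phi> y"
    and smult: "\<And>c x. x \<in> A1 \<Longrightarrow> \<phi> (c \<cdot>\<^sub>m x) = c \<cdot>\<^sub>m \<phi> x"
    using \<phi> unfolding alg_iso_map_def by auto
  have form: "W i \<bullet> (M2 *\<^sub>v W j) = s * M1 $$ (i,j)" if i: "i < 2*n" and j: "j < 2*n" for i j
  proof (rule a2.smult_t_inj)
    have "(W i \<bullet> (M2 *\<^sub>v W j)) \<cdot>\<^sub>m t2 = \<phi> (X1 i * X1 j)"
      using hom[OF XA XA, OF i j] \<phi>X[OF i] \<phi>X[OF j] a2.alg_elem_0_mult[OF W W, OF i j] by simp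
    also have "\<dots> = (s * M1 $$ (i,j)) \<cdot>\<^sub>m t2"
      using a1.X_mult_X[OF i j] smult[OF tA] \<phi>t by (simp add: smult_smult_mat mult.commute)
    finally show "(W i \<bullet> (M2 *\<^sub>v W j)) \<cdot>\<^sub>m t2 = (s * M1 $$ (i,j)) \<cdot>\<^sub>m t2" .
  qed
  define D where "D = mat (2*n) (2*n) (\<lambda>(i,j). W i $ j)"
  have D: "D \<in> carrier_mat (2*n) (2*n)" by (simp add: D_def)
  have rowD: "row D i = W i" if "i < 2*n" for i
    using W[OF that] that unfolding D_def by (intro eq_vecI) auto
  have "D * M2 * transpose_mat D = s \<cdot>\<^sub>m M1"
  proof (rule eq_matI)
    fix i j assume "i < dim_row (s \<cdot>\<^sub>m M1)" "j < dim_col (s \<cdot>\<^sub>m M1)"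
    then have i: "i < 2*n" and j: "j < 2*n" using a1.M_carrier by auto
    show "(D * M2 * transpose_mat D) $$ (i,j) = (s \<cdot>\<^sub>m M1) $$ (i,j)"
      using congruence_index[OF D a2.M_carrier i j] rowD[OF i] rowD[OF j] form[OF i j] i j a1.M_carrier
      by simp
  qed (use D a1.M_carrier a2.M_carrier in auto)
  then show ?thesis using that D s by blast
qed

lemma congruence_of_alg_iso:
  assumes "alg_iso (2*n+2) A1 A2"
  shows "\<exists>C \<in> carrier_mat (2*n) (2*n). invertible_mat C \<and> M1 = C * M2 * transpose_mat C"
proof -
  obtain \<phi> where "alg_iso_map (2*n+2) A1 A2 \<phi>" using assms unfolding alg_iso_iff by blast
  then obtain D s where D: "D \<in> carrier_mat (2*n) (2*n)" and s: "s \<noteq> 0"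
    and DMD: "D * M2 * transpose_mat D = s \<cdot>\<^sub>m M1"
    by (rule scaled_congruence_of_alg_iso_map)
  have "D * symp_mat n * transpose_mat D = s \<cdot>\<^sub>m symp_mat n"
    by (rule symp_congruence_of_scaled_congruence[OF D a1.M_carrier a2.M_carrier DMD
          a1.structure_matrix_skew[OF a1.M_structure] a2.structure_matrix_skew[OF a2.M_structure]])
  then have "det D \<noteq> 0" by (rule det_neq_0_of_symp_congruence[OF D s])
  then show ?thesis by (rule congruence_of_scaled_congruence[OF D _ s a2.M_carrier DMD])
qed

end

theorem lemma3p8:
  fixes n :: nat and A1 A2 m1 m2 :: "complex mat set"
    and X1 X2 :: "nat \<Rightarrow> complex mat" and t1 t2 M1 M2 :: "complex mat"
  assumes "n \<ge> 1"
    and "tautological_algebra n A1" and "tautological_algebra n A2"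
    and "maximal_ideal (2*n+2) A1 m1" and "maximal_ideal (2*n+2) A2 m2"
    and "symplectic_basis n m1 X1 t1" and "symplectic_basis n m2 X2 t2"
    and "structure_matrix n X1 t1 M1" and "structure_matrix n X2 t2 M2"
  shows "alg_iso (2*n+2) A1 A2 \<longleftrightarrow>
    (\<exists>C \<in> carrier_mat (2*n) (2*n). invertible_mat C \<and> M1 = C * M2 * transpose_mat C)"
proof -
  have "heis_alg n m1 X1 t1 A1 M1" "heis_alg n m2 X2 t2 A2 M2"
    using tautological_algebra_heis_alg assms by simp_all
  then interpret heis_alg_pair n m1 X1 t1 A1 M1 m2 X2 t2 A2 M2
    unfolding heis_alg_pair_def by blast
  show ?thesis
  proof
    show "\<exists>C \<in> carrier_mat (2*n) (2*n). invertible_mat C \<and> M1 = C * M2 * transpose_mat C"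
      if "alg_iso (2*n+2) A1 A2" using that by (rule congruence_of_alg_iso)
    assume "\<exists>C \<in> carrier_mat (2*n) (2*n). invertible_mat C \<and> M1 = C * M2 * transpose_mat C"
    then obtain C where "C \<in> carrier_mat (2*n) (2*n)" "invertible_mat C" "M1 = C * M2 * transpose_mat C"
      by blast
    then show "alg_iso (2*n+2) A1 A2" by (rule alg_iso_of_congruence)
  qed
qed

end
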